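(* Suppose the pair $\{E,F\}$, $E,F:\mathcal I\to\mathbb R^{m\times m}$ sufficiently smooth, is equivalent to a pair in standard canonical form $\left\{\begin{bmatrix}I_d&0\\0&N\end{bmatrix},\begin{bmatrix}\Omega&0\\0&I_a\end{bmatrix}\right\}$ with $a=m-d$, $\Omega:\mathcal I\to\mathbb R^{d\times d}$ and $N:\mathcal I\to\mathbb R^{a\times a}$ pointwise strictly upper triangular (rank of $N$ not necessarily constant). Then (1) $\operatorname{rank}\mathcal E_{[k]}(t)=\operatorname{rank}\mathcal D_{[k]}(t)=km+d$ for all $t\in\mathcal I$ and all $k\ge a-1$; (2) $\dim(\ker E(t)\cap S_{[k]}(t))=0$ for all $t\in\mathcal I$ and all $k\ge a$.
   Context: Two pairs are equivalent if $\tilde E=LEK$, $\tilde F=LFK+LEK'$ for pointwise nonsingular sufficiently smooth $L,K$. Derivative arrays: $\mathcal E_{[k]}$ is the $(k+1)m\times(k+1)m$ block lower triangular matrix function with $(i,j)$ block ($0\le j\le i\le k$) $\binom{i}{j}E^{(i-j)}+\binom{i}{j+1}F^{(i-j-1)}$ (the $F$-term absent for $j=i$), zero for $j>i$; $\mathcal F_{[k]}=[F;F';\dots;F^{(k)}]$; $\mathcal D_{[0]}=E$, $\mathcal D_{[k]}=\begin{bmatrix}E&0\\\mathcal F_{[k-1]}&\mathcal E_{[k-1]}\end{bmatrix}$ for $k\ge1$; $S_{[k]}(t)=\{z:\mathcal F_{[k]}(t)z\in\operatorname{im}\mathcal E_{[k]}(t)\}$. *)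

theory Defs
  imports "HOL-Analysis.Analysis" "Jordan_Normal_Form.DL_Rank" "Jordan_Normal_Form.Matrix_Kernel"
begin

definition mderiv :: "nat \<Rightarrow> (real \<Rightarrow> real mat) \<Rightarrow> real \<Rightarrow> real mat" where
  "mderiv k A t = mat (dim_row (A t)) (dim_col (A t)) (\<lambda>(i,j). (deriv ^^ k) (\<lambda>s. A s $$ (i,j)) t)"

(* A : I -> R^{r x c}, with all entries infinitely differentiable on I ("sufficiently smooth") *)
definition smooth_mat_on :: "real set \<Rightarrow> nat \<Rightarrow> nat \<Rightarrow> (real \<Rightarrow> real mat) \<Rightarrow> bool" where
  "smooth_mat_on I r c A \<longleftrightarrow> (\<forall>t\<in>I. A t \<in> carrier_mat r c) \<and>
     (\<forall>i<r. \<forall>j<c. \<forall>k. \<forall>t\<in>I. ((deriv ^^ k) (\<lambda>s. A s $$ (i,j))) differentiable (at t))"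

definition equiv_pair :: "real set \<Rightarrow> nat \<Rightarrow> (real \<Rightarrow> real mat) \<Rightarrow> (real \<Rightarrow> real mat)
     \<Rightarrow> (real \<Rightarrow> real mat) \<Rightarrow> (real \<Rightarrow> real mat) \<Rightarrow> bool" where
  "equiv_pair I m E F E' F' \<longleftrightarrow> (\<exists>L K. smooth_mat_on I m m L \<and> smooth_mat_on I m m K \<and>
     (\<forall>t\<in>I. det (L t) \<noteq> 0 \<and> det (K t) \<noteq> 0 \<and>
        E' t = L t * E t * K t \<and>
        F' t = L t * F t * K t + L t * E t * mderiv 1 K t))"

definition strictly_upper_triangular :: "nat \<Rightarrow> real mat \<Rightarrow> bool" where
  "strictly_upper_triangular n A \<longleftrightarrow> (\<forall>i<n. \<forall>j<n. j \<le> i \<longrightarrow> A $$ (i,j) = 0)"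

definition calE :: "nat \<Rightarrow> (real \<Rightarrow> real mat) \<Rightarrow> (real \<Rightarrow> real mat) \<Rightarrow> nat \<Rightarrow> real \<Rightarrow> real mat" where
  "calE m E F k t = mat ((k+1)*m) ((k+1)*m) (\<lambda>(p,q).
     (let i = p div m; j = q div m; r = p mod m; c = q mod m in
      if j \<le> i then
        of_nat (i choose j) * (mderiv (i-j) E t $$ (r,c))
        + (if j < i then of_nat (i choose (j+1)) * (mderiv (i-j-1) F t $$ (r,c)) else 0)
      else 0))"

definition calF :: "nat \<Rightarrow> (real \<Rightarrow> real mat) \<Rightarrow> nat \<Rightarrow> real \<Rightarrow> real mat" where
  "calF m F k t = mat ((k+1)*m) m (\<lambda>(p,c). mderiv (p div m) F t $$ (p mod m, c))"

definition calD :: "nat \<Rightarrow> (real \<Rightarrow> real mat) \<Rightarrow> (real \<Rightarrow> real mat) \<Rightarrow> nat \<Rightarrow> real \<Rightarrow> real mat" where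
  "calD m E F k t = (if k = 0 then E t else
     four_block_mat (E t) (0\<^sub>m m (k*m)) (calF m F (k-1) t) (calE m E F (k-1) t))"

definition calS :: "nat \<Rightarrow> (real \<Rightarrow> real mat) \<Rightarrow> (real \<Rightarrow> real mat) \<Rightarrow> nat \<Rightarrow> real \<Rightarrow> real vec set" where
  "calS m E F k t = {z \<in> carrier_vec m. \<exists>y \<in> carrier_vec ((k+1)*m). calF m F k t *\<^sub>v z = calE m E F k t *\<^sub>v y}"

definition mrank :: "real mat \<Rightarrow> nat" where
  "mrank A = vec_space.rank (dim_row A) A"

definition subspace_dim :: "nat \<Rightarrow> real vec set \<Rightarrow> nat" where
  "subspace_dim n W = vectorspace.dim class_ring ((module_vec TYPE(real) n)\<lparr>carrier := W\<rparr>)"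

end

(* Derivative arrays transform well under equivalence: if x = K y, then
   L (E x' + F x) = E~ y' + F~ y, and differentiating k times with the Leibniz rule gives
   [F~_[k] E~_[k]] Y = T_k(L) [F_[k] E_[k]] T_(k+1)(K) Y for the jet Y of y, where T_n(A) is the
   block lower triangular matrix of binomially weighted derivatives of A.  Every vector is the
   jet of a polynomial, so this is an identity of matrices; T(L) and T(K) are invertible, hence
   the kernel dimensions of E_[k] and D_[k], and whether ker E meets S_[k] trivially, are
   invariants of the equivalence class.

   For the canonical pair the equations decouple into the differentiated ODE u' = - Omega u for
   the d differential components and the recurrence v = - N v' for the a algebraic ones.
   Since N is strictly upper triangular, component q of the j-th derivative of v is determined
   by components c > q of derivatives of order at most j + 1, so it vanishes as soon as
   j + a - 1 - q <= k.  Hence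
   both kernels are parametrised by the top derivative of v, they have dimension a, and
   rank-nullity gives the ranks km + d. *)

theory Submission
  imports Defs
begin

no_notation vec_nth (infixl \<open>$\<close> 90)

section \<open>Smooth real functions and the Leibniz rule\<close>

definition smooth_on :: "real set \<Rightarrow> (real \<Rightarrow> real) \<Rightarrow> bool" where
  "smooth_on I f \<longleftrightarrow> (\<forall>k. \<forall>t\<in>I. (deriv ^^ k) f differentiable (at t))"

lemma higher_deriv_cong_open:
  assumes "open I" "\<And>s. s \<in> I \<Longrightarrow> f s = g s" "t \<in> I"
  shows "(deriv ^^ k) f t = (deriv ^^ k) g t"
  using assms(3)
proof (induction k arbitrary: t)
  case (Suc k)
  have "\<forall>\<^sub>F s in nhds t. (deriv ^^ k) f s = (deriv ^^ k) g s"
    using Suc assms(1) unfolding eventually_nhds by blast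
  then show ?case using deriv_cong_ev[OF _ refl] by simp
qed (use assms in simp)

lemma differentiable_cong_open:
  assumes "f differentiable (at t)" "open I" "t \<in> I" "\<And>s. s \<in> I \<Longrightarrow> f s = g s"
  shows "g differentiable (at t)"
  using assms has_derivative_transform_within_open unfolding differentiable_def by blast

lemma smooth_on_has_higher_deriv:
  assumes "smooth_on I f" "t \<in> I"
  shows "((deriv ^^ k) f has_real_derivative (deriv ^^ Suc k) f t) (at t)"
  using assms DERIV_deriv_iff_real_differentiable unfolding smooth_on_def by simp

lemma smooth_on_cong:
  assumes I: "open I" and "smooth_on I f" and eq: "\<And>s. s \<in> I \<Longrightarrow> f s = g s"
  shows "smooth_on I g"
  unfolding smooth_on_def
proof (intro allI ballI)
  fix k t assume "t \<in> I"
  have "(deriv ^^ k) f differentiable (at t)"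
    using \<open>smooth_on I f\<close> \<open>t \<in> I\<close> unfolding smooth_on_def by blast
  then show "(deriv ^^ k) g differentiable (at t)"
    by (rule differentiable_cong_open[OF _ I \<open>t \<in> I\<close>]) (rule higher_deriv_cong_open[OF I eq])
qed

lemma smooth_on_deriv: "smooth_on I f \<Longrightarrow> smooth_on I (deriv f)"
  unfolding smooth_on_def by (metis funpow_Suc_right o_apply)

lemma higher_deriv_const: "(deriv ^^ k) (\<lambda>s::real. c) = (\<lambda>s. if k = 0 then c else 0)"
  by (induction k) auto

lemma smooth_on_const: "smooth_on I (\<lambda>s. c)"
  unfolding smooth_on_def higher_deriv_const by simp

lemma higher_deriv_add:
  assumes I: "open I" and f: "smooth_on I f" and g: "smooth_on I g" and t: "t \<in> I"
  shows "(deriv ^^ k) (\<lambda>s. f s + g s) t = (deriv ^^ k) f t + (deriv ^^ k) g t"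
  using t
proof (induction k arbitrary: t)
  case (Suc k)
  have "((\<lambda>s. (deriv ^^ k) f s + (deriv ^^ k) g s) has_real_derivative
          (deriv ^^ Suc k) f t + (deriv ^^ Suc k) g t) (at t)"
    using smooth_on_has_higher_deriv[OF f Suc.prems] smooth_on_has_higher_deriv[OF g Suc.prems]
    by (rule DERIV_add)
  then have "((deriv ^^ k) (\<lambda>s. f s + g s) has_real_derivative
          (deriv ^^ Suc k) f t + (deriv ^^ Suc k) g t) (at t)"
    by (rule has_field_derivative_transform_within_open[OF _ I Suc.prems]) (use Suc.IH in simp)
  then show ?case by (simp add: DERIV_imp_deriv)
qed simp

lemma binomial_convolution_Suc:
  fixes a b :: "nat \<Rightarrow> 'a::comm_semiring_1"
  shows "(\<Sum>i\<le>Suc n. of_nat (Suc n choose i) * a i * b (Suc n - i)) =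
         (\<Sum>i\<le>n. of_nat (n choose i) * (a (Suc i) * b (n - i) + a i * b (Suc (n - i))))"
proof -
  have "(\<Sum>i\<le>Suc n. of_nat (Suc n choose i) * a i * b (Suc n - i))
      = a 0 * b (Suc n) + (\<Sum>i\<le>n. of_nat (n choose Suc i) * a (Suc i) * b (n - i))
          + (\<Sum>i\<le>n. of_nat (n choose i) * a (Suc i) * b (n - i))"
    by (subst sum.atMost_Suc_shift) (simp add: sum.distrib algebra_simps)
  also have "a 0 * b (Suc n) + (\<Sum>i\<le>n. of_nat (n choose Suc i) * a (Suc i) * b (n - i))
      = (\<Sum>i\<le>n. of_nat (n choose i) * a i * b (Suc (n - i)))"
    using sum.atMost_Suc_shift[of "\<lambda>i. of_nat (n choose i) * a i * b (Suc n - i)" n]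
    by (simp add: Suc_diff_le binomial_eq_0)
  finally show ?thesis by (simp add: sum.distrib algebra_simps)
qed

lemma higher_deriv_mult:
  assumes I: "open I" and f: "smooth_on I f" and g: "smooth_on I g" and t: "t \<in> I"
  shows "(deriv ^^ n) (\<lambda>s. f s * g s) t =
           (\<Sum>i\<le>n. of_nat (n choose i) * (deriv ^^ i) f t * (deriv ^^ (n - i)) g t)"
  using t
proof (induction n arbitrary: t)
  case (Suc n)
  have df: "((deriv ^^ i) f has_real_derivative (deriv ^^ Suc i) f t) (at t)"
    and dg: "((deriv ^^ i) g has_real_derivative (deriv ^^ Suc i) g t) (at t)" for i
    using smooth_on_has_higher_deriv[OF f Suc.prems] smooth_on_has_higher_deriv[OF g Suc.prems] by auto
  have "((\<lambda>s. \<Sum>i\<le>n. of_nat (n choose i) * (deriv ^^ i) f s * (deriv ^^ (n - i)) g s)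
          has_real_derivative (\<Sum>i\<le>n. of_nat (n choose i) *
             ((deriv ^^ Suc i) f t * (deriv ^^ (n - i)) g t + (deriv ^^ i) f t * (deriv ^^ Suc (n - i)) g t)))
         (at t)"
    by (auto intro!: derivative_eq_intros df dg simp: algebra_simps)
  then have "((deriv ^^ n) (\<lambda>s. f s * g s) has_real_derivative
      (\<Sum>i\<le>Suc n. of_nat (Suc n choose i) * (deriv ^^ i) f t * (deriv ^^ (Suc n - i)) g t)) (at t)"
    unfolding binomial_convolution_Suc[where a = "\<lambda>i. (deriv ^^ i) f t" and b = "\<lambda>i. (deriv ^^ i) g t"]
    by (rule has_field_derivative_transform_within_open[OF _ I Suc.prems]) (use Suc.IH in simp)
  then show ?case by (simp add: DERIV_imp_deriv del: sum.atMost_Suc)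
qed simp

lemma smooth_on_add:
  assumes I: "open I" and f: "smooth_on I f" and g: "smooth_on I g"
  shows "smooth_on I (\<lambda>s. f s + g s)"
  unfolding smooth_on_def
proof (intro allI ballI)
  fix k t assume t: "t \<in> I"
  have "(\<lambda>s. (deriv ^^ k) f s + (deriv ^^ k) g s) differentiable (at t)"
    using f g t unfolding smooth_on_def by simp
  then show "(deriv ^^ k) (\<lambda>s. f s + g s) differentiable (at t)"
    by (rule differentiable_cong_open[OF _ I t]) (rule higher_deriv_add[symmetric, OF I f g])
qed

lemma smooth_on_mult:
  assumes I: "open I" and f: "smooth_on I f" and g: "smooth_on I g"
  shows "smooth_on I (\<lambda>s. f s * g s)"
  unfolding smooth_on_def
proof (intro allI ballI)
  fix k t assume t: "t \<in> I"
  have "(\<lambda>s. \<Sum>i\<le>k. of_nat (k choose i) * (deriv ^^ i) f s * (deriv ^^ (k - i)) g s)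
          differentiable (at t)"
    using f g t unfolding smooth_on_def by simp
  then show "(deriv ^^ k) (\<lambda>s. f s * g s) differentiable (at t)"
    by (rule differentiable_cong_open[OF _ I t]) (rule higher_deriv_mult[symmetric, OF I f g])
qed

lemma smooth_on_sum:
  assumes I: "open I" and f: "\<And>i. i \<in> A \<Longrightarrow> smooth_on I (f i)"
  shows "smooth_on I (\<lambda>s. \<Sum>i\<in>A. f i s)"
  using f by (induction A rule: infinite_finite_induct) (simp_all add: smooth_on_const smooth_on_add[OF I])

lemma higher_deriv_sum:
  assumes I: "open I" and f: "\<And>i. i \<in> A \<Longrightarrow> smooth_on I (f i)" and t: "t \<in> I"
  shows "(deriv ^^ k) (\<lambda>s. \<Sum>i\<in>A. f i s) t = (\<Sum>i\<in>A. (deriv ^^ k) (f i) t)"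
  using f
proof (induction A rule: infinite_finite_induct)
  case (insert i A)
  then show ?case by (simp add: higher_deriv_add[OF I _ smooth_on_sum[OF I] t])
qed (simp_all add: higher_deriv_const)

lemma higher_deriv_cmult:
  assumes I: "open I" and f: "smooth_on I f" and t: "t \<in> I"
  shows "(deriv ^^ k) (\<lambda>s. c * f s) t = c * (deriv ^^ k) f t"
proof -
  have "(\<Sum>i\<le>k. of_nat (k choose i) * (deriv ^^ i) (\<lambda>s. c) t * (deriv ^^ (k - i)) f t)
      = (\<Sum>i\<le>k. if i = 0 then c * (deriv ^^ k) f t else 0)"
    by (intro sum.cong) (auto simp: higher_deriv_const)
  then show ?thesis by (simp add: higher_deriv_mult[OF I smooth_on_const f t])
qed

lemma higher_deriv_monomial:
  "(deriv ^^ k) (\<lambda>s::real. (s - t) ^ p / fact p) =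
     (\<lambda>s. if k \<le> p then (s - t) ^ (p - k) / fact (p - k) else 0)"
proof (induction k)
  case (Suc k)
  have "deriv (\<lambda>s. if k \<le> p then (s - t) ^ (p - k) / fact (p - k) else 0) s
          = (if Suc k \<le> p then (s - t) ^ (p - Suc k) / fact (p - Suc k) else 0)" for s
  proof (cases "Suc k \<le> p")
    case True
    then obtain q where q: "p - k = Suc q" "p - Suc k = q" by (metis Suc_diff_le diff_Suc_Suc)
    have "((\<lambda>s. (s - t) ^ Suc q) has_real_derivative of_nat (Suc q) * (s - t) ^ q) (at s)"
      using DERIV_power[OF DERIV_diff[OF DERIV_ident DERIV_const[of t]], of "Suc q"] by simp
    from DERIV_cdivide[OF this, where c = "fact (Suc q)"]
    have "((\<lambda>s. (s - t) ^ Suc q / fact (Suc q)) has_real_derivative (s - t) ^ q / fact q) (at s)"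
      by (simp add: fact_Suc del: of_nat_Suc)
    then show ?thesis using True q by (simp add: DERIV_imp_deriv)
  next
    case False
    then have "k = p \<or> p < k" by auto
    then show ?thesis by auto
  qed
  then show ?case by (simp add: Suc)
qed simp

lemma smooth_on_monomial: "smooth_on I (\<lambda>s::real. (s - t) ^ p / fact p)"
  unfolding smooth_on_def higher_deriv_monomial
proof (intro allI ballI)
  fix k s
  show "(\<lambda>s. if k \<le> p then (s - t) ^ (p - k) / fact (p - k) else 0) differentiable (at s)"
    by (cases "k \<le> p") simp_all
qed

section \<open>Block vectors and matrices\<close>

lemma block_index_less:
  assumes "i < n" "r < m"
  shows "i * m + r < n * (m::nat)"
proof -
  have "i * m + r < Suc i * m" using assms by simp
  also have "\<dots> \<le> n * m" using assms by (intro mult_right_mono) auto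
  finally show ?thesis .
qed

lemma block_index_cases:
  assumes "p < n * (m::nat)"
  obtains i r where "i < n" "r < m" "p = i * m + r"
proof
  have "m > 0" using assms by (cases m) auto
  then show "p div m < n" "p mod m < m" using assms by (simp_all add: div_less_iff_less_mult)
qed simp

lemma vec_eq_blockI:
  assumes "X \<in> carrier_vec (n * m)" "Y \<in> carrier_vec (n * m)"
    and "\<And>i r. i < n \<Longrightarrow> r < m \<Longrightarrow> X $ (i * m + r) = Y $ (i * m + r)"
  shows "X = Y"
proof (rule eq_vecI)
  fix p assume "p < dim_vec Y"
  then have "p < n * m" using assms by auto
  then show "X $ p = Y $ p" by (rule block_index_cases) (use assms in auto)
qed (use assms in auto)

lemma sum_lessThan_add: "(\<Sum>q < n + (m::nat). g q) = (\<Sum>q < n. g q) + (\<Sum>c < m. g (n + c))"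
  by (induction m) (auto simp: add.assoc)

lemma sum_lessThan_mult: "(\<Sum>q < n * (m::nat). g q) = (\<Sum>j < n. \<Sum>c < m. g (j * m + c))"
proof (induction n)
  case (Suc n)
  have "(\<Sum>q < Suc n * m. g q) = (\<Sum>q < n * m + m. g q)" by (simp add: add.commute)
  then show ?case by (simp add: sum_lessThan_add Suc)
qed simp

definition block_mat :: "nat \<Rightarrow> nat \<Rightarrow> (nat \<Rightarrow> nat \<Rightarrow> nat \<Rightarrow> nat \<Rightarrow> real) \<Rightarrow> real mat" where
  "block_mat n m B = mat (n * m) (n * m) (\<lambda>(p, q). B (p div m) (q div m) (p mod m) (q mod m))"

lemma block_mat_carrier [simp]: "block_mat n m B \<in> carrier_mat (n * m) (n * m)"
  unfolding block_mat_def by auto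

lemma block_mat_mult_vec_index:
  assumes "y \<in> carrier_vec (n * m)" "i < n" "r < m"
  shows "(block_mat n m B *\<^sub>v y) $ (i * m + r) = (\<Sum>j<n. \<Sum>c<m. B i j r c * y $ (j * m + c))"
proof -
  have i: "i * m + r < n * m" using block_index_less assms by blast
  have "(block_mat n m B *\<^sub>v y) $ (i * m + r) = (\<Sum>q < n * m. block_mat n m B $$ (i * m + r, q) * y $ q)"
    using assms i unfolding block_mat_def by (auto simp: scalar_prod_def atLeast0LessThan)
  also have "\<dots> = (\<Sum>j<n. \<Sum>c<m. B i j r c * y $ (j * m + c))"
    unfolding sum_lessThan_mult using assms i block_index_less unfolding block_mat_def
    by (intro sum.cong refl) auto
  finally show ?thesis .
qed

lemma block_lower_triangular_kernel:
  assumes y: "y \<in> carrier_vec (n * m)" and z: "block_mat n m B *\<^sub>v y = 0\<^sub>v (n * m)"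
    and upper: "\<And>i j r c. i < j \<Longrightarrow> B i j r c = 0"
    and diag: "\<And>i v. i < n \<Longrightarrow> v \<in> carrier_vec m \<Longrightarrow>
                 mat m m (\<lambda>(r, c). B i i r c) *\<^sub>v v = 0\<^sub>v m \<Longrightarrow> v = 0\<^sub>v m"
  shows "y = 0\<^sub>v (n * m)"
proof -
  have "\<forall>r<m. y $ (i * m + r) = 0" if "i < n" for i
    using that
  proof (induction i rule: less_induct)
    case (less i)
    define v where "v = vec m (\<lambda>c. y $ (i * m + c))"
    have "mat m m (\<lambda>(r, c). B i i r c) *\<^sub>v v = 0\<^sub>v m"
    proof (rule eq_vecI)
      fix r assume "r < dim_vec (0\<^sub>v m)"
      then have r: "r < m" by simp
      have below: "(\<Sum>c<m. B i j r c * y $ (j * m + c)) = 0" if "j \<in> {..<n} - {i}" for j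
        using that less upper by (cases "j < i") auto
      have "(mat m m (\<lambda>(r, c). B i i r c) *\<^sub>v v) $ r = (\<Sum>c<m. B i i r c * y $ (i * m + c))"
        using r by (simp add: v_def scalar_prod_def atLeast0LessThan)
      also have "\<dots> = (\<Sum>j<n. \<Sum>c<m. B i j r c * y $ (j * m + c))"
        using less.prems below by (subst sum.remove[of _ i]) auto
      also have "\<dots> = (block_mat n m B *\<^sub>v y) $ (i * m + r)"
        by (rule block_mat_mult_vec_index[symmetric, OF y less.prems r])
      also have "\<dots> = 0"
        using z block_index_less[OF less.prems r] by simp
      finally show "(mat m m (\<lambda>(r, c). B i i r c) *\<^sub>v v) $ r = 0\<^sub>v m $ r" using r by simp
    qed simp
    then have "v = 0\<^sub>v m" using diag less.prems by (simp add: v_def)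
    then show ?case
    proof (intro allI impI)
      fix r assume "v = 0\<^sub>v m" "r < m"
      then have "v $ r = 0" by simp
      then show "y $ (i * m + r) = 0" using \<open>r < m\<close> by (simp add: v_def)
    qed
  qed
  then show ?thesis by (intro vec_eq_blockI[OF y]) (auto simp: block_index_less)
qed

section \<open>Jets\<close>

definition smooth_vec_on :: "real set \<Rightarrow> nat \<Rightarrow> (real \<Rightarrow> real vec) \<Rightarrow> bool" where
  "smooth_vec_on I n x \<longleftrightarrow> (\<forall>t\<in>I. x t \<in> carrier_vec n) \<and> (\<forall>c<n. smooth_on I (\<lambda>s. x s $ c))"

definition jet :: "nat \<Rightarrow> nat \<Rightarrow> (real \<Rightarrow> real vec) \<Rightarrow> real \<Rightarrow> real vec" where
  "jet n m x t = vec (Suc n * m) (\<lambda>p. (deriv ^^ (p div m)) (\<lambda>s. x s $ (p mod m)) t)"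

definition vderiv :: "nat \<Rightarrow> (real \<Rightarrow> real vec) \<Rightarrow> real \<Rightarrow> real vec" where
  "vderiv m x s = vec m (\<lambda>c. deriv (\<lambda>s. x s $ c) s)"

definition leibniz_mat :: "nat \<Rightarrow> nat \<Rightarrow> (real \<Rightarrow> real mat) \<Rightarrow> real \<Rightarrow> real mat" where
  "leibniz_mat n m A t = block_mat (Suc n) m
     (\<lambda>i j r c. if j \<le> i then of_nat (i choose j) * mderiv (i - j) A t $$ (r, c) else 0)"

lemma smooth_mat_on_carrier: "smooth_mat_on I r c A \<Longrightarrow> t \<in> I \<Longrightarrow> A t \<in> carrier_mat r c"
  unfolding smooth_mat_on_def by blast

lemma smooth_mat_on_entry: "smooth_mat_on I r c A \<Longrightarrow> i < r \<Longrightarrow> j < c \<Longrightarrow> smooth_on I (\<lambda>s. A s $$ (i, j))"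
  unfolding smooth_mat_on_def smooth_on_def by blast

lemma mderiv_index:
  "A t \<in> carrier_mat r c \<Longrightarrow> i < r \<Longrightarrow> j < c \<Longrightarrow> mderiv k A t $$ (i, j) = (deriv ^^ k) (\<lambda>s. A s $$ (i, j)) t"
  unfolding mderiv_def by auto

lemma mderiv_carrier: "A t \<in> carrier_mat r c \<Longrightarrow> mderiv k A t \<in> carrier_mat r c"
  unfolding mderiv_def by auto

lemma mderiv_0: "A t \<in> carrier_mat r c \<Longrightarrow> mderiv 0 A t = A t"
  unfolding mderiv_def by (auto intro!: eq_matI)

lemma smooth_vec_on_carrier: "smooth_vec_on I n x \<Longrightarrow> s \<in> I \<Longrightarrow> x s \<in> carrier_vec n"
  unfolding smooth_vec_on_def by auto

lemma smooth_vec_on_entry: "smooth_vec_on I n x \<Longrightarrow> c < n \<Longrightarrow> smooth_on I (\<lambda>s. x s $ c)"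
  unfolding smooth_vec_on_def by auto

lemma dim_jet [simp]: "dim_vec (jet n m x t) = Suc n * m"
  unfolding jet_def by auto

lemma jet_carrier [simp]: "jet n m x t \<in> carrier_vec (Suc n * m)"
  unfolding jet_def by auto

lemma jet_index: "i \<le> n \<Longrightarrow> r < m \<Longrightarrow> jet n m x t $ (i * m + r) = (deriv ^^ i) (\<lambda>s. x s $ r) t"
  unfolding jet_def using block_index_less[of i "Suc n" r m] by simp

lemma vderiv_carrier [simp]: "vderiv m x s \<in> carrier_vec m"
  unfolding vderiv_def by simp

lemma vderiv_index: "c < m \<Longrightarrow> vderiv m x s $ c = deriv (\<lambda>s. x s $ c) s"
  unfolding vderiv_def by simp

lemma leibniz_mat_carrier [simp]: "leibniz_mat n m A t \<in> carrier_mat (Suc n * m) (Suc n * m)"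
  unfolding leibniz_mat_def by (rule block_mat_carrier)

lemma mult_mat_vec_index_sum:
  fixes A :: "real mat"
  shows "A \<in> carrier_mat n m \<Longrightarrow> v \<in> carrier_vec m \<Longrightarrow> r < n \<Longrightarrow> (A *\<^sub>v v) $ r = (\<Sum>c<m. v $ c * A $$ (r, c))"
  by (auto simp: scalar_prod_def atLeast0LessThan mult.commute intro!: sum.cong)

lemma smooth_vec_on_mult_mat:
  assumes I: "open I" and A: "smooth_mat_on I m m A" and x: "smooth_vec_on I m x"
  shows "smooth_vec_on I m (\<lambda>s. A s *\<^sub>v x s)"
  unfolding smooth_vec_on_def
proof (intro conjI allI impI ballI)
  fix s assume "s \<in> I"
  then show "A s *\<^sub>v x s \<in> carrier_vec m"
    using smooth_mat_on_carrier[OF A] smooth_vec_on_carrier[OF x] by (metis mult_mat_vec_carrier)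
next
  fix r assume r: "r < m"
  have "smooth_on I (\<lambda>s. \<Sum>c<m. x s $ c * A s $$ (r, c))"
    using smooth_vec_on_entry[OF x] smooth_mat_on_entry[OF A r]
    by (intro smooth_on_sum[OF I] smooth_on_mult[OF I]) auto
  then show "smooth_on I (\<lambda>s. (A s *\<^sub>v x s) $ r)"
    by (rule smooth_on_cong[OF I])
       (rule mult_mat_vec_index_sum[symmetric, OF smooth_mat_on_carrier[OF A] smooth_vec_on_carrier[OF x] r])
qed

lemma smooth_vec_on_add:
  assumes I: "open I" and x: "smooth_vec_on I m x" and y: "smooth_vec_on I m y"
  shows "smooth_vec_on I m (\<lambda>s. x s + y s)"
  unfolding smooth_vec_on_def
proof (intro conjI allI impI ballI)
  fix s assume "s \<in> I"
  then show "x s + y s \<in> carrier_vec m"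
    using smooth_vec_on_carrier[OF x] smooth_vec_on_carrier[OF y] by auto
next
  fix c assume c: "c < m"
  have eq: "x s $ c + y s $ c = (x s + y s) $ c" if "s \<in> I" for s
    using smooth_vec_on_carrier[OF y that] c by auto
  show "smooth_on I (\<lambda>s. (x s + y s) $ c)"
    by (rule smooth_on_cong[OF I smooth_on_add[OF I smooth_vec_on_entry[OF x c] smooth_vec_on_entry[OF y c]] eq])
qed

lemma smooth_vec_on_vderiv:
  assumes "smooth_vec_on I m x"
  shows "smooth_vec_on I m (vderiv m x)"
  using smooth_on_deriv[OF smooth_vec_on_entry[OF assms]]
  unfolding smooth_vec_on_def by (simp add: vderiv_index)

lemma jet_cong_open:
  assumes "open I" "t \<in> I" "\<And>s. s \<in> I \<Longrightarrow> x s = y s"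
  shows "jet n m x t = jet n m y t"
  unfolding jet_def by (intro eq_vecI) (auto intro!: higher_deriv_cong_open[OF assms(1) _ assms(2)] simp: assms(3))

lemma jet_add:
  assumes I: "open I" and t: "t \<in> I" and x: "smooth_vec_on I m x" and y: "smooth_vec_on I m y"
  shows "jet n m (\<lambda>s. x s + y s) t = jet n m x t + jet n m y t"
proof (rule vec_eq_blockI)
  fix i r assume i: "i < Suc n" and r: "r < m"
  have "jet n m (\<lambda>s. x s + y s) t $ (i * m + r) = (deriv ^^ i) (\<lambda>s. (x s + y s) $ r) t"
    using i r by (simp add: jet_index)
  also have "\<dots> = (deriv ^^ i) (\<lambda>s. x s $ r + y s $ r) t"
  proof (rule higher_deriv_cong_open[OF I _ t])
    fix s assume "s \<in> I"
    then show "(x s + y s) $ r = x s $ r + y s $ r" using smooth_vec_on_carrier[OF y \<open>s \<in> I\<close>] r by auto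
  qed
  also have "\<dots> = (deriv ^^ i) (\<lambda>s. x s $ r) t + (deriv ^^ i) (\<lambda>s. y s $ r) t"
    by (rule higher_deriv_add[OF I smooth_vec_on_entry[OF x r] smooth_vec_on_entry[OF y r] t])
  also have "\<dots> = jet n m x t $ (i * m + r) + jet n m y t $ (i * m + r)"
    using i r by (simp add: jet_index)
  also have "\<dots> = (jet n m x t + jet n m y t) $ (i * m + r)"
    using block_index_less[OF i r] by simp
  finally show "jet n m (\<lambda>s. x s + y s) t $ (i * m + r) = (jet n m x t + jet n m y t) $ (i * m + r)" .
qed (rule jet_carrier, rule add_carrier_vec[OF jet_carrier jet_carrier])

lemma jet_mult_mat:
  assumes I: "open I" and t: "t \<in> I" and A: "smooth_mat_on I m m A" and x: "smooth_vec_on I m x"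
  shows "jet n m (\<lambda>s. A s *\<^sub>v x s) t = leibniz_mat n m A t *\<^sub>v jet n m x t"
proof (rule vec_eq_blockI)
  fix i r assume i: "i < Suc n" and r: "r < m"
  have xs: "\<And>c. c < m \<Longrightarrow> smooth_on I (\<lambda>s. x s $ c)" using smooth_vec_on_entry[OF x] .
  have As: "\<And>c. c < m \<Longrightarrow> smooth_on I (\<lambda>s. A s $$ (r, c))" using smooth_mat_on_entry[OF A r] .
  have "jet n m (\<lambda>s. A s *\<^sub>v x s) t $ (i * m + r) = (deriv ^^ i) (\<lambda>s. (A s *\<^sub>v x s) $ r) t"
    using i r by (simp add: jet_index)
  also have "\<dots> = (deriv ^^ i) (\<lambda>s. \<Sum>c<m. x s $ c * A s $$ (r, c)) t"
    by (rule higher_deriv_cong_open[OF I _ t])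
       (rule mult_mat_vec_index_sum[OF smooth_mat_on_carrier[OF A] smooth_vec_on_carrier[OF x] r])
  also have "\<dots> = (\<Sum>c<m. (deriv ^^ i) (\<lambda>s. x s $ c * A s $$ (r, c)) t)"
    by (rule higher_deriv_sum[OF I _ t]) (auto intro!: smooth_on_mult[OF I] xs As)
  also have "\<dots> = (\<Sum>c<m. \<Sum>j\<le>i. of_nat (i choose j) * (deriv ^^ j) (\<lambda>s. x s $ c) t
                                       * (deriv ^^ (i - j)) (\<lambda>s. A s $$ (r, c)) t)"
    by (intro sum.cong refl higher_deriv_mult[OF I xs As t]) auto
  also have "\<dots> = (\<Sum>j\<le>i. \<Sum>c<m. of_nat (i choose j) * (deriv ^^ j) (\<lambda>s. x s $ c) t
                                       * (deriv ^^ (i - j)) (\<lambda>s. A s $$ (r, c)) t)"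
    by (rule sum.swap)
  also have "\<dots> = (\<Sum>j\<le>i. \<Sum>c<m. (if j \<le> i then of_nat (i choose j) * mderiv (i - j) A t $$ (r, c) else 0)
                                       * jet n m x t $ (j * m + c))"
    using i r smooth_mat_on_carrier[OF A t] by (intro sum.cong refl) (auto simp: jet_index mderiv_index)
  also have "\<dots> = (\<Sum>j<Suc n. \<Sum>c<m. (if j \<le> i then of_nat (i choose j) * mderiv (i - j) A t $$ (r, c) else 0)
                                       * jet n m x t $ (j * m + c))"
    by (rule sum.mono_neutral_left) (use i in auto)
  also have "\<dots> = (leibniz_mat n m A t *\<^sub>v jet n m x t) $ (i * m + r)"
    unfolding leibniz_mat_def by (rule block_mat_mult_vec_index[symmetric, OF jet_carrier i r])
  finally show "jet n m (\<lambda>s. A s *\<^sub>v x s) t $ (i * m + r) = (leibniz_mat n m A t *\<^sub>v jet n m x t) $ (i * m + r)" .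
qed (rule jet_carrier, rule mult_mat_vec_carrier[OF leibniz_mat_carrier jet_carrier])

lemma vderiv_mult_mat:
  assumes I: "open I" and s: "s \<in> I" and K: "smooth_mat_on I m m K" and x: "smooth_vec_on I m x"
  shows "vderiv m (\<lambda>s. K s *\<^sub>v x s) s = mderiv 1 K s *\<^sub>v x s + K s *\<^sub>v vderiv m x s"
proof (rule eq_vecI)
  have Ks: "K s \<in> carrier_mat m m" by (rule smooth_mat_on_carrier[OF K s])
  have xs: "x s \<in> carrier_vec m" by (rule smooth_vec_on_carrier[OF x s])
  have K': "mderiv 1 K s \<in> carrier_mat m m" using Ks by (rule mderiv_carrier)
  fix r assume "r < dim_vec (mderiv 1 K s *\<^sub>v x s + K s *\<^sub>v vderiv m x s)"
  then have r: "r < m" using Ks K' by simp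
  have "vderiv m (\<lambda>s. K s *\<^sub>v x s) s $ r = (deriv ^^ 1) (\<lambda>s. (K s *\<^sub>v x s) $ r) s"
    using r by (simp add: vderiv_index)
  also have "\<dots> = (deriv ^^ 1) (\<lambda>s. \<Sum>c<m. x s $ c * K s $$ (r, c)) s"
    by (rule higher_deriv_cong_open[OF I _ s])
       (rule mult_mat_vec_index_sum[OF smooth_mat_on_carrier[OF K] smooth_vec_on_carrier[OF x] r])
  also have "\<dots> = (\<Sum>c<m. (deriv ^^ 1) (\<lambda>s. x s $ c * K s $$ (r, c)) s)"
    using smooth_vec_on_entry[OF x] smooth_mat_on_entry[OF K r]
    by (intro higher_deriv_sum[OF I _ s] smooth_on_mult[OF I]) auto
  also have "\<dots> = (\<Sum>c<m. x s $ c * deriv (\<lambda>s. K s $$ (r, c)) s + deriv (\<lambda>s. x s $ c) s * K s $$ (r, c))"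
    using smooth_vec_on_entry[OF x] smooth_mat_on_entry[OF K r]
    by (intro sum.cong refl, subst higher_deriv_mult[OF I _ _ s]) auto
  also have "\<dots> = (\<Sum>c<m. x s $ c * deriv (\<lambda>s. K s $$ (r, c)) s)
                 + (\<Sum>c<m. deriv (\<lambda>s. x s $ c) s * K s $$ (r, c))"
    by (rule sum.distrib)
  also have "\<dots> = (mderiv 1 K s *\<^sub>v x s) $ r + (K s *\<^sub>v vderiv m x s) $ r"
    unfolding mult_mat_vec_index_sum[OF K' xs r] mult_mat_vec_index_sum[OF Ks vderiv_carrier r]
    using Ks r by (intro arg_cong2[where f = "(+)"] sum.cong refl) (simp_all add: mderiv_index vderiv_index)
  also have "\<dots> = (mderiv 1 K s *\<^sub>v x s + K s *\<^sub>v vderiv m x s) $ r"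
    using r Ks by simp
  finally show "vderiv m (\<lambda>s. K s *\<^sub>v x s) s $ r = (mderiv 1 K s *\<^sub>v x s + K s *\<^sub>v vderiv m x s) $ r" .
qed (use smooth_mat_on_carrier[OF K s] in \<open>simp add: vderiv_def mderiv_def\<close>)

lemma vec_first_index: "p < n \<Longrightarrow> vec_first X n $ p = X $ p"
  unfolding vec_first_def by simp

lemma vec_last_block_index:
  assumes "X \<in> carrier_vec (Suc (Suc k) * m)" "j < Suc k" "c < m"
  shows "vec_last X (Suc k * m) $ (j * m + c) = X $ (Suc j * m + c)"
  using assms block_index_less[of j "Suc k" c m] unfolding vec_last_def by (simp add: ac_simps)

lemma jet_vderiv: "jet k m (vderiv m x) t = vec_last (jet (Suc k) m x t) (Suc k * m)"
proof (rule vec_eq_blockI)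
  fix i r assume i: "i < Suc k" and r: "r < m"
  have "jet k m (vderiv m x) t $ (i * m + r) = (deriv ^^ i) (deriv (\<lambda>s. x s $ r)) t"
    using i r by (simp add: jet_index vderiv_index)
  also have "\<dots> = jet (Suc k) m x t $ (Suc i * m + r)"
    using i r by (simp only: jet_index funpow_Suc_right o_apply)
  finally show "jet k m (vderiv m x) t $ (i * m + r) = vec_last (jet (Suc k) m x t) (Suc k * m) $ (i * m + r)"
    by (simp only: vec_last_block_index[OF jet_carrier i r])
qed (rule jet_carrier, rule vec_last_carrier)

lemma jet_truncate:
  assumes "k \<le> n"
  shows "vec_first (jet n m x t) (Suc k * m) = jet k m x t"
proof (rule vec_eq_blockI)
  fix i r assume "i < Suc k" "r < m"
  then show "vec_first (jet n m x t) (Suc k * m) $ (i * m + r) = jet k m x t $ (i * m + r)"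
    using assms block_index_less[of i "Suc k" r m] by (simp add: vec_first_index jet_index)
qed (rule vec_first_carrier, rule jet_carrier)

definition taylor_vec :: "nat \<Rightarrow> nat \<Rightarrow> real \<Rightarrow> real vec \<Rightarrow> real \<Rightarrow> real vec" where
  "taylor_vec n m t X = (\<lambda>s. vec m (\<lambda>c. \<Sum>p\<le>n. X $ (p * m + c) * ((s - t) ^ p / fact p)))"

lemma taylor_vec_index:
  "c < m \<Longrightarrow> (\<lambda>s. taylor_vec n m t X s $ c) = (\<lambda>s. \<Sum>p\<le>n. X $ (p * m + c) * ((s - t) ^ p / fact p))"
  unfolding taylor_vec_def by auto

lemma smooth_vec_on_taylor_vec:
  assumes "open I"
  shows "smooth_vec_on I m (taylor_vec n m t X)"
  unfolding smooth_vec_on_def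
proof (intro conjI allI impI ballI)
  fix c assume "c < m"
  show "smooth_on I (\<lambda>s. taylor_vec n m t X s $ c)"
    unfolding taylor_vec_index[OF \<open>c < m\<close>]
    by (intro smooth_on_sum smooth_on_mult smooth_on_const smooth_on_monomial assms)
qed (simp add: taylor_vec_def)

lemma jet_taylor_vec:
  assumes I: "open I" and t: "t \<in> I" and X: "X \<in> carrier_vec (Suc n * m)"
  shows "jet n m (taylor_vec n m t X) t = X"
proof (rule vec_eq_blockI)
  fix i r assume i: "i < Suc n" and r: "r < m"
  have "jet n m (taylor_vec n m t X) t $ (i * m + r)
      = (deriv ^^ i) (\<lambda>s. \<Sum>p\<le>n. X $ (p * m + r) * ((s - t) ^ p / fact p)) t"
    using i r by (simp add: jet_index taylor_vec_index)
  also have "\<dots> = (\<Sum>p\<le>n. (deriv ^^ i) (\<lambda>s. X $ (p * m + r) * ((s - t) ^ p / fact p)) t)"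
    by (rule higher_deriv_sum[OF I _ t]) (intro smooth_on_mult smooth_on_const smooth_on_monomial I)
  also have "\<dots> = (\<Sum>p\<le>n. if p = i then X $ (i * m + r) else 0)"
    by (intro sum.cong refl)
       (simp only: higher_deriv_cmult[OF I smooth_on_monomial t] higher_deriv_monomial, auto)
  finally show "jet n m (taylor_vec n m t X) t $ (i * m + r) = X $ (i * m + r)"
    using i by simp
qed (rule jet_carrier, rule X)

section \<open>The derivative array as an operator on jets\<close>

lemma calE_block_mat:
  "calE m E F k t = block_mat (Suc k) m (\<lambda>i j r c.
     if j \<le> i then of_nat (i choose j) * mderiv (i - j) E t $$ (r, c)
       + (if j < i then of_nat (i choose (j + 1)) * mderiv (i - j - 1) F t $$ (r, c) else 0)
     else 0)"
  unfolding calE_def block_mat_def Let_def by simp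

lemma calE_carrier [simp]: "calE m E F k t \<in> carrier_mat (Suc k * m) (Suc k * m)"
  unfolding calE_block_mat by (rule block_mat_carrier)

lemma calF_carrier [simp]: "calF m F k t \<in> carrier_mat (Suc k * m) m"
  unfolding calF_def by simp

lemma dim_calE [simp]: "dim_row (calE m E F k t) = Suc k * m" "dim_col (calE m E F k t) = Suc k * m"
  using calE_carrier by blast+

lemma calD_carrier:
  assumes "E t \<in> carrier_mat m m"
  shows "calD m E F k t \<in> carrier_mat (Suc k * m) (Suc k * m)"
  using assms four_block_carrier_mat[OF assms calE_carrier] by (cases k) (simp_all add: calD_def)

lemma calF_mult_vec_index:
  assumes "z \<in> carrier_vec m" "i < Suc k" "r < m"
  shows "(calF m F k t *\<^sub>v z) $ (i * m + r) = (\<Sum>c<m. mderiv i F t $$ (r, c) * z $ c)"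
  using assms block_index_less[of i "Suc k" r m] unfolding calF_def
  by (auto simp: scalar_prod_def atLeast0LessThan intro!: sum.cong)

text \<open>The lower block row \<open>[\<F>\<^sub>[\<^sub>k\<^sub>] \<E>\<^sub>[\<^sub>k\<^sub>]]\<close> of \<open>\<D>\<^sub>[\<^sub>k\<^sub>+\<^sub>1\<^sub>]\<close> as an operator.\<close>

definition deriv_array_op ::
  "nat \<Rightarrow> (real \<Rightarrow> real mat) \<Rightarrow> (real \<Rightarrow> real mat) \<Rightarrow> nat \<Rightarrow> real \<Rightarrow> real vec \<Rightarrow> real vec" where
  "deriv_array_op m E F k t X = calF m F k t *\<^sub>v vec_first X m + calE m E F k t *\<^sub>v vec_last X (Suc k * m)"

lemma deriv_array_op_carrier [simp]: "deriv_array_op m E F k t X \<in> carrier_vec (Suc k * m)"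
  unfolding deriv_array_op_def
  by (rule add_carrier_vec[OF mult_mat_vec_carrier[OF calF_carrier vec_first_carrier]
                              mult_mat_vec_carrier[OF calE_carrier vec_last_carrier]])

lemma vec_first_append: "v \<in> carrier_vec n \<Longrightarrow> vec_first (v @\<^sub>v w) n = v"
  unfolding vec_first_def by (auto intro!: eq_vecI)

lemma vec_last_append: "v \<in> carrier_vec n \<Longrightarrow> w \<in> carrier_vec n' \<Longrightarrow> vec_last (v @\<^sub>v w) n' = w"
  unfolding vec_last_def by (auto intro!: eq_vecI)

lemma deriv_array_op_append:
  assumes "z \<in> carrier_vec m" "y \<in> carrier_vec (Suc k * m)"
  shows "deriv_array_op m E F k t (z @\<^sub>v y) = calF m F k t *\<^sub>v z + calE m E F k t *\<^sub>v y"
  unfolding deriv_array_op_def vec_first_append[OF assms(1)] vec_last_append[OF assms] ..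

lemma calD_Suc_mult_vec:
  assumes X: "X \<in> carrier_vec (Suc (Suc k) * m)" and E: "E t \<in> carrier_mat m m"
  shows "calD m E F (Suc k) t *\<^sub>v X = (E t *\<^sub>v vec_first X m) @\<^sub>v deriv_array_op m E F k t X"
proof -
  have "X = vec_first X m @\<^sub>v vec_last X (Suc k * m)"
    using vec_first_last_append[of X m "Suc k * m"] X by simp
  then have "calD m E F (Suc k) t *\<^sub>v X
      = four_block_mat (E t) (0\<^sub>m m (Suc k * m)) (calF m F k t) (calE m E F k t)
          *\<^sub>v (vec_first X m @\<^sub>v vec_last X (Suc k * m))"
    unfolding calD_def by simp
  also have "\<dots> = (E t *\<^sub>v vec_first X m + 0\<^sub>m m (Suc k * m) *\<^sub>v vec_last X (Suc k * m))
                   @\<^sub>v deriv_array_op m E F k t X"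
    unfolding deriv_array_op_def
    by (rule four_block_mat_mult_vec[OF E zero_carrier_mat calF_carrier calE_carrier
                                        vec_first_carrier vec_last_carrier])
  also have "0\<^sub>m m (Suc k * m) *\<^sub>v vec_last X (Suc k * m) = 0\<^sub>v m"
    by (rule eq_vecI) auto
  finally show ?thesis using E by simp
qed

lemma sum_lessThan_if_le:
  assumes "i < (n::nat)"
  shows "(\<Sum>j<n. if j \<le> i then g j else 0) = (\<Sum>j\<le>i. g j)"
proof -
  have "(\<Sum>j<n. if j \<le> i then g j else 0) = (\<Sum>j\<le>i. if j \<le> i then g j else 0)"
    using assms by (intro sum.mono_neutral_right) auto
  then show ?thesis by simp
qed

lemma sum_lessThan_if_less:
  assumes "i \<le> (n::nat)"
  shows "(\<Sum>j<n. if j < i then g j else 0) = (\<Sum>j<i. g j)"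
proof -
  have "(\<Sum>j<n. if j < i then g j else 0) = (\<Sum>j<i. if j < i then g j else 0)"
    using assms by (intro sum.mono_neutral_right) auto
  then show ?thesis by simp
qed

text \<open>The \<open>F\<close>-terms of \<open>\<E>\<^sub>[\<^sub>k\<^sub>]\<close> and the block \<open>\<F>\<^sub>[\<^sub>k\<^sub>]\<close> combine into a single Leibniz sum
  by a shift of the summation index.\<close>

lemma deriv_array_op_index:
  assumes X: "X \<in> carrier_vec (Suc (Suc k) * m)" and i: "i < Suc k" and r: "r < m"
  shows "deriv_array_op m E F k t X $ (i * m + r) =
    (\<Sum>j\<le>i. of_nat (i choose j) * (\<Sum>c<m. mderiv (i - j) E t $$ (r, c) * X $ (Suc j * m + c)
                                          + mderiv (i - j) F t $$ (r, c) * X $ (j * m + c)))"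
proof -
  define e where "e = (\<lambda>j. \<Sum>c<m. mderiv (i - j) E t $$ (r, c) * X $ (Suc j * m + c))"
  define f where "f = (\<lambda>j. \<Sum>c<m. mderiv (i - j) F t $$ (r, c) * X $ (j * m + c))"
  have ir: "i * m + r < Suc k * m" by (rule block_index_less[OF i r])
  have "(calE m E F k t *\<^sub>v vec_last X (Suc k * m)) $ (i * m + r)
      = (\<Sum>j<Suc k. \<Sum>c<m. (if j \<le> i then of_nat (i choose j) * mderiv (i - j) E t $$ (r, c)
          + (if j < i then of_nat (i choose (j + 1)) * mderiv (i - j - 1) F t $$ (r, c) else 0) else 0)
          * X $ (Suc j * m + c))"
    unfolding calE_block_mat block_mat_mult_vec_index[OF vec_last_carrier i r]
    by (intro sum.cong refl) (simp only: lessThan_iff vec_last_block_index[OF X])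
  also have "\<dots> = (\<Sum>j<Suc k. (if j \<le> i then of_nat (i choose j) * e j else 0)
                     + (if j < i then of_nat (i choose Suc j) * f (Suc j) else 0))"
    unfolding e_def f_def
    by (intro sum.cong refl) (auto simp: sum_distrib_left sum.distrib algebra_simps)
  also have "\<dots> = (\<Sum>j\<le>i. of_nat (i choose j) * e j) + (\<Sum>j<i. of_nat (i choose Suc j) * f (Suc j))"
    using i by (simp only: sum.distrib sum_lessThan_if_le[OF i] sum_lessThan_if_less[of i "Suc k"] less_imp_le)
  finally have E: "(calE m E F k t *\<^sub>v vec_last X (Suc k * m)) $ (i * m + r)
      = (\<Sum>j\<le>i. of_nat (i choose j) * e j) + (\<Sum>j<i. of_nat (i choose Suc j) * f (Suc j))" .
  have F: "(calF m F k t *\<^sub>v vec_first X m) $ (i * m + r) = f 0"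
    using i r by (simp add: calF_mult_vec_index vec_first_index f_def)
  have "deriv_array_op m E F k t X $ (i * m + r)
      = (calF m F k t *\<^sub>v vec_first X m) $ (i * m + r) + (calE m E F k t *\<^sub>v vec_last X (Suc k * m)) $ (i * m + r)"
    unfolding deriv_array_op_def using ir by simp
  then have "deriv_array_op m E F k t X $ (i * m + r)
      = f 0 + (\<Sum>j<i. of_nat (i choose Suc j) * f (Suc j)) + (\<Sum>j\<le>i. of_nat (i choose j) * e j)"
    unfolding E F by simp
  also have "f 0 + (\<Sum>j<i. of_nat (i choose Suc j) * f (Suc j)) = (\<Sum>j\<le>i. of_nat (i choose j) * f j)"
    by (simp add: sum.atMost_shift)
  finally show ?thesis
    by (simp add: e_def f_def sum.distrib distrib_left)
qed

lemma dim_leibniz_mat [simp]: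
  "dim_row (leibniz_mat n m A t) = Suc n * m" "dim_col (leibniz_mat n m A t) = Suc n * m"
  using leibniz_mat_carrier by blast+

lemma leibniz_mat_mult_vec_index:
  assumes y: "y \<in> carrier_vec (Suc n * m)" and i: "i < Suc n" and r: "r < m"
  shows "(leibniz_mat n m A t *\<^sub>v y) $ (i * m + r) =
           (\<Sum>j\<le>i. of_nat (i choose j) * (\<Sum>c<m. mderiv (i - j) A t $$ (r, c) * y $ (j * m + c)))"
proof -
  have "(leibniz_mat n m A t *\<^sub>v y) $ (i * m + r) =
          (\<Sum>j<Suc n. if j \<le> i then of_nat (i choose j) * (\<Sum>c<m. mderiv (i - j) A t $$ (r, c) * y $ (j * m + c)) else 0)"
    unfolding leibniz_mat_def block_mat_mult_vec_index[OF y i r]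
    by (intro sum.cong refl) (auto simp: sum_distrib_left mult.assoc)
  then show ?thesis by (simp only: sum_lessThan_if_le[OF i])
qed

lemma deriv_array_op_leibniz:
  assumes X: "X \<in> carrier_vec (Suc (Suc k) * m)"
  shows "deriv_array_op m E F k t X =
           leibniz_mat k m E t *\<^sub>v vec_last X (Suc k * m) + leibniz_mat k m F t *\<^sub>v vec_first X (Suc k * m)"
proof (rule vec_eq_blockI)
  fix i r assume i: "i < Suc k" and r: "r < m"
  have ir: "i * m + r < Suc k * m" by (rule block_index_less[OF i r])
  have "(leibniz_mat k m E t *\<^sub>v vec_last X (Suc k * m)) $ (i * m + r)
      = (\<Sum>j\<le>i. of_nat (i choose j) * (\<Sum>c<m. mderiv (i - j) E t $$ (r, c) * X $ (Suc j * m + c)))"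
    using i unfolding leibniz_mat_mult_vec_index[OF vec_last_carrier i r]
    by (intro sum.cong refl arg_cong2[where f = "(*)"]) (auto simp: vec_last_block_index[OF X] simp del: mult_Suc)
  moreover have "(leibniz_mat k m F t *\<^sub>v vec_first X (Suc k * m)) $ (i * m + r)
      = (\<Sum>j\<le>i. of_nat (i choose j) * (\<Sum>c<m. mderiv (i - j) F t $$ (r, c) * X $ (j * m + c)))"
    using i unfolding leibniz_mat_mult_vec_index[OF vec_first_carrier i r]
    by (intro sum.cong refl arg_cong2[where f = "(*)"])
       (auto simp: vec_first_index block_index_less simp del: mult_Suc)
  ultimately show "deriv_array_op m E F k t X $ (i * m + r) = (leibniz_mat k m E t *\<^sub>v vec_last X (Suc k * m)
      + leibniz_mat k m F t *\<^sub>v vec_first X (Suc k * m)) $ (i * m + r)"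
    using ir by (simp add: deriv_array_op_index[OF X i r] sum.distrib distrib_left)
qed (rule deriv_array_op_carrier,
     rule add_carrier_vec[OF mult_mat_vec_carrier[OF leibniz_mat_carrier vec_last_carrier]
                             mult_mat_vec_carrier[OF leibniz_mat_carrier vec_first_carrier]])

lemma jet_residual:
  assumes I: "open I" and t: "t \<in> I" and E: "smooth_mat_on I m m E" and F: "smooth_mat_on I m m F"
    and x: "smooth_vec_on I m x"
  shows "jet k m (\<lambda>s. E s *\<^sub>v vderiv m x s + F s *\<^sub>v x s) t = deriv_array_op m E F k t (jet (Suc k) m x t)"
proof -
  have x': "smooth_vec_on I m (vderiv m x)" by (rule smooth_vec_on_vderiv[OF x])
  have "jet k m (\<lambda>s. E s *\<^sub>v vderiv m x s + F s *\<^sub>v x s) t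
      = leibniz_mat k m E t *\<^sub>v jet k m (vderiv m x) t + leibniz_mat k m F t *\<^sub>v jet k m x t"
    by (simp add: jet_add[OF I t smooth_vec_on_mult_mat[OF I E x'] smooth_vec_on_mult_mat[OF I F x]]
                  jet_mult_mat[OF I t E x'] jet_mult_mat[OF I t F x])
  also have "\<dots> = deriv_array_op m E F k t (jet (Suc k) m x t)"
    by (simp add: deriv_array_op_leibniz[OF jet_carrier] jet_vderiv jet_truncate del: mult_Suc)
  finally show ?thesis .
qed

lemma add_vec_rotate:
  assumes "a \<in> carrier_vec n" "b \<in> carrier_vec n" "c \<in> carrier_vec n"
  shows "a + (b + c) = c + a + (b :: 'a :: comm_monoid_add vec)"
  by (rule eq_vecI) (use assms in \<open>auto simp: ac_simps\<close>)

lemma equiv_residual: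
  assumes I: "open I" and s: "s \<in> I"
    and E: "smooth_mat_on I m m E" and F: "smooth_mat_on I m m F"
    and L: "smooth_mat_on I m m L" and K: "smooth_mat_on I m m K" and x: "smooth_vec_on I m x"
    and E': "E' s = L s * E s * K s" and F': "F' s = L s * F s * K s + L s * E s * mderiv 1 K s"
  shows "E' s *\<^sub>v vderiv m x s + F' s *\<^sub>v x s
           = L s *\<^sub>v (E s *\<^sub>v vderiv m (\<lambda>s. K s *\<^sub>v x s) s + F s *\<^sub>v (K s *\<^sub>v x s))"
proof -
  have Ls: "L s \<in> carrier_mat m m" and Es: "E s \<in> carrier_mat m m" and Fs: "F s \<in> carrier_mat m m"
    and Ks: "K s \<in> carrier_mat m m"
    using smooth_mat_on_carrier[OF _ s] E F L K by blast+
  have K's: "mderiv 1 K s \<in> carrier_mat m m" using Ks by (rule mderiv_carrier)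
  have xs: "x s \<in> carrier_vec m" by (rule smooth_vec_on_carrier[OF x s])
  have x's: "vderiv m x s \<in> carrier_vec m" by simp
  note carriers = Ls Es Fs Ks K's xs x's
  have "E' s *\<^sub>v vderiv m x s + F' s *\<^sub>v x s
      = L s *\<^sub>v (E s *\<^sub>v (K s *\<^sub>v vderiv m x s)) + (L s *\<^sub>v (F s *\<^sub>v (K s *\<^sub>v x s))
          + L s *\<^sub>v (E s *\<^sub>v (mderiv 1 K s *\<^sub>v x s)))"
    unfolding E' F' using carriers
    by (simp add: add_mult_distrib_mat_vec[of _ m m] assoc_mult_mat_vec[of _ m m _ m])
  also have "\<dots> = L s *\<^sub>v (E s *\<^sub>v (mderiv 1 K s *\<^sub>v x s + K s *\<^sub>v vderiv m x s) + F s *\<^sub>v (K s *\<^sub>v x s))"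
    using carriers by (simp add: mult_add_distrib_mat_vec[of _ m m] add_vec_rotate[of _ m])
  also have "mderiv 1 K s *\<^sub>v x s + K s *\<^sub>v vderiv m x s = vderiv m (\<lambda>s. K s *\<^sub>v x s) s"
    by (rule vderiv_mult_mat[symmetric, OF I s K x])
  finally show ?thesis .
qed

lemma deriv_array_op_equiv:
  assumes I: "open I" and t: "t \<in> I"
    and E: "smooth_mat_on I m m E" and F: "smooth_mat_on I m m F"
    and L: "smooth_mat_on I m m L" and K: "smooth_mat_on I m m K"
    and E'_smooth: "smooth_mat_on I m m E'" and F'_smooth: "smooth_mat_on I m m F'"
    and E': "\<And>s. s \<in> I \<Longrightarrow> E' s = L s * E s * K s"
    and F': "\<And>s. s \<in> I \<Longrightarrow> F' s = L s * F s * K s + L s * E s * mderiv 1 K s"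
    and X: "X \<in> carrier_vec (Suc (Suc k) * m)"
  shows "deriv_array_op m E' F' k t X =
           leibniz_mat k m L t *\<^sub>v deriv_array_op m E F k t (leibniz_mat (Suc k) m K t *\<^sub>v X)"
proof -
  define y where "y = taylor_vec (Suc k) m t X"
  have y: "smooth_vec_on I m y" unfolding y_def by (rule smooth_vec_on_taylor_vec[OF I])
  have jet_y: "jet (Suc k) m y t = X" unfolding y_def by (rule jet_taylor_vec[OF I t X])
  have Ky: "smooth_vec_on I m (\<lambda>s. K s *\<^sub>v y s)" by (rule smooth_vec_on_mult_mat[OF I K y])
  have "deriv_array_op m E' F' k t X = jet k m (\<lambda>s. E' s *\<^sub>v vderiv m y s + F' s *\<^sub>v y s) t"
    using jet_residual[OF I t E'_smooth F'_smooth y] jet_y by simp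
  also have "\<dots> = jet k m (\<lambda>s. L s *\<^sub>v (E s *\<^sub>v vderiv m (\<lambda>s. K s *\<^sub>v y s) s + F s *\<^sub>v (K s *\<^sub>v y s))) t"
    by (rule jet_cong_open[OF I t], rule equiv_residual[OF I _ E F L K y]) (simp_all add: E' F')
  also have "\<dots> = leibniz_mat k m L t *\<^sub>v jet k m (\<lambda>s. E s *\<^sub>v vderiv m (\<lambda>s. K s *\<^sub>v y s) s + F s *\<^sub>v (K s *\<^sub>v y s)) t"
    by (intro jet_mult_mat[OF I t L] smooth_vec_on_add smooth_vec_on_mult_mat smooth_vec_on_vderiv I E F Ky)
  also have "\<dots> = leibniz_mat k m L t *\<^sub>v deriv_array_op m E F k t (jet (Suc k) m (\<lambda>s. K s *\<^sub>v y s) t)"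
    by (simp only: jet_residual[OF I t E F Ky])
  also have "jet (Suc k) m (\<lambda>s. K s *\<^sub>v y s) t = leibniz_mat (Suc k) m K t *\<^sub>v X"
    using jet_mult_mat[OF I t K y] jet_y by simp
  finally show ?thesis .
qed

lemma det_nonzero_kernel:
  fixes A :: "real mat"
  assumes "A \<in> carrier_mat n n" "det A \<noteq> 0" "v \<in> carrier_vec n" "A *\<^sub>v v = 0\<^sub>v n"
  shows "v = 0\<^sub>v n"
  using det_0_iff_vec_prod_zero assms by blast

lemma kernel_trivial_inverse:
  fixes A :: "real mat"
  assumes A: "A \<in> carrier_mat n n" and ker: "\<And>v. v \<in> carrier_vec n \<Longrightarrow> A *\<^sub>v v = 0\<^sub>v n \<Longrightarrow> v = 0\<^sub>v n"
  obtains C where "C \<in> carrier_mat n n" "A * C = 1\<^sub>m n" "C * A = 1\<^sub>m n"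
proof -
  have "det A \<noteq> 0" using det_0_iff_vec_prod_zero[OF A] ker by blast
  from det_non_zero_imp_unit[OF A this, unfolded Units_def, of "()"]
  show thesis using that by (auto simp: ring_mat_def)
qed

lemma leibniz_mat_kernel:
  assumes A: "A t \<in> carrier_mat m m" "det (A t) \<noteq> 0"
    and y: "y \<in> carrier_vec (Suc n * m)" "leibniz_mat n m A t *\<^sub>v y = 0\<^sub>v (Suc n * m)"
  shows "y = 0\<^sub>v (Suc n * m)"
proof (rule block_lower_triangular_kernel[OF y[unfolded leibniz_mat_def]])
  fix i v assume "v \<in> carrier_vec m"
    and "mat m m (\<lambda>(r, c). if i \<le> i then of_nat (i choose i) * mderiv (i - i) A t $$ (r, c) else 0) *\<^sub>v v = 0\<^sub>v m"
  moreover have "mat m m (\<lambda>(r, c). if i \<le> i then of_nat (i choose i) * mderiv (i - i) A t $$ (r, c) else 0) = A t"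
    using A by (intro eq_matI) (auto simp: mderiv_0)
  ultimately show "v = 0\<^sub>v m" using det_nonzero_kernel[OF A] by simp
qed simp

lemma vec_first_leibniz_mat_mult:
  assumes X: "X \<in> carrier_vec (Suc n * m)" and A: "A t \<in> carrier_mat m m"
  shows "vec_first (leibniz_mat n m A t *\<^sub>v X) m = A t *\<^sub>v vec_first X m"
proof (rule eq_vecI)
  fix r assume "r < dim_vec (A t *\<^sub>v vec_first X m)"
  then have r: "r < m" using A by simp
  have "vec_first (leibniz_mat n m A t *\<^sub>v X) m $ r = (leibniz_mat n m A t *\<^sub>v X) $ (0 * m + r)"
    using r by (simp add: vec_first_index)
  also have "\<dots> = (\<Sum>j\<le>0. of_nat (0 choose j) * (\<Sum>c<m. mderiv (0 - j) A t $$ (r, c) * X $ (j * m + c)))"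
    by (rule leibniz_mat_mult_vec_index[OF X _ r]) simp
  also have "\<dots> = (A t *\<^sub>v vec_first X m) $ r"
    using A r by (simp add: mult_mat_vec_index_sum[OF A(1) vec_first_carrier r] vec_first_index mderiv_0 mult.commute)
  finally show "vec_first (leibniz_mat n m A t *\<^sub>v X) m $ r = (A t *\<^sub>v vec_first X m) $ r" .
qed (use A in simp)

definition shifted_leibniz_mat :: "nat \<Rightarrow> nat \<Rightarrow> (real \<Rightarrow> real mat) \<Rightarrow> real \<Rightarrow> real mat" where
  "shifted_leibniz_mat n m A t = block_mat (Suc n) m
     (\<lambda>i j r c. if j \<le> i then of_nat (Suc i choose Suc j) * mderiv (i - j) A t $$ (r, c) else 0)"

lemma shifted_leibniz_mat_carrier [simp]:
  "shifted_leibniz_mat n m A t \<in> carrier_mat (Suc n * m) (Suc n * m)"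
  unfolding shifted_leibniz_mat_def by (rule block_mat_carrier)

lemma shifted_leibniz_mat_mult_vec_index:
  assumes y: "y \<in> carrier_vec (Suc n * m)" and i: "i < Suc n" and r: "r < m"
  shows "(shifted_leibniz_mat n m A t *\<^sub>v y) $ (i * m + r) =
           (\<Sum>j\<le>i. of_nat (Suc i choose Suc j) * (\<Sum>c<m. mderiv (i - j) A t $$ (r, c) * y $ (j * m + c)))"
proof -
  have "(shifted_leibniz_mat n m A t *\<^sub>v y) $ (i * m + r) = (\<Sum>j<Suc n. if j \<le> i
          then of_nat (Suc i choose Suc j) * (\<Sum>c<m. mderiv (i - j) A t $$ (r, c) * y $ (j * m + c)) else 0)"
    unfolding shifted_leibniz_mat_def block_mat_mult_vec_index[OF y i r]
    by (intro sum.cong refl) (auto simp: sum_distrib_left mult.assoc)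
  then show ?thesis by (simp only: sum_lessThan_if_le[OF i])
qed

lemma shifted_leibniz_mat_kernel:
  assumes A: "A t \<in> carrier_mat m m" "det (A t) \<noteq> 0"
    and y: "y \<in> carrier_vec (Suc n * m)" "shifted_leibniz_mat n m A t *\<^sub>v y = 0\<^sub>v (Suc n * m)"
  shows "y = 0\<^sub>v (Suc n * m)"
proof (rule block_lower_triangular_kernel[OF y[unfolded shifted_leibniz_mat_def]])
  fix i v assume "v \<in> carrier_vec m"
    and "mat m m (\<lambda>(r, c). if i \<le> i then of_nat (Suc i choose Suc i) * mderiv (i - i) A t $$ (r, c) else 0)
           *\<^sub>v v = 0\<^sub>v m"
  moreover have "mat m m (\<lambda>(r, c). if i \<le> i then of_nat (Suc i choose Suc i) * mderiv (i - i) A t $$ (r, c) else 0)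
      = A t"
    using A by (intro eq_matI) (auto simp: mderiv_0)
  ultimately show "v = 0\<^sub>v m" using det_nonzero_kernel[OF A] by simp
qed simp

lemma append_block_index:
  assumes "z \<in> carrier_vec m" "y \<in> carrier_vec (n * m)" "j < n" "c < m"
  shows "(z @\<^sub>v y) $ (Suc j * m + c) = y $ (j * m + c)"
  using assms block_index_less[of j n c m] by (simp add: add.assoc)

lemma leibniz_mat_mult_zero_append:
  assumes y: "y \<in> carrier_vec (Suc k * m)"
  shows "leibniz_mat (Suc k) m A t *\<^sub>v (0\<^sub>v m @\<^sub>v y) = 0\<^sub>v m @\<^sub>v (shifted_leibniz_mat k m A t *\<^sub>v y)"
proof -
  have X: "0\<^sub>v m @\<^sub>v y \<in> carrier_vec (Suc (Suc k) * m)"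
    using append_carrier_vec[OF zero_carrier_vec y] by simp
  have Y: "0\<^sub>v m @\<^sub>v (shifted_leibniz_mat k m A t *\<^sub>v y) \<in> carrier_vec (Suc (Suc k) * m)"
    using append_carrier_vec[OF zero_carrier_vec mult_mat_vec_carrier[OF shifted_leibniz_mat_carrier y]]
    by simp
  show ?thesis
  proof (rule vec_eq_blockI[OF mult_mat_vec_carrier[OF leibniz_mat_carrier X] Y])
    fix i r assume i: "i < Suc (Suc k)" and r: "r < m"
    show "(leibniz_mat (Suc k) m A t *\<^sub>v (0\<^sub>v m @\<^sub>v y)) $ (i * m + r)
        = (0\<^sub>v m @\<^sub>v (shifted_leibniz_mat k m A t *\<^sub>v y)) $ (i * m + r)"
    proof (cases i)
      case 0
      have "(leibniz_mat (Suc k) m A t *\<^sub>v (0\<^sub>v m @\<^sub>v y)) $ (0 * m + r)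
          = (\<Sum>j\<le>0. of_nat (0 choose j) * (\<Sum>c<m. mderiv (0 - j) A t $$ (r, c) * (0\<^sub>v m @\<^sub>v y) $ (j * m + c)))"
        by (rule leibniz_mat_mult_vec_index[OF X _ r]) simp
      then show ?thesis using 0 r y by simp
    next
      case (Suc i')
      have i': "i' < Suc k" using i Suc by simp
      have "(leibniz_mat (Suc k) m A t *\<^sub>v (0\<^sub>v m @\<^sub>v y)) $ (i * m + r)
          = (\<Sum>j<Suc i. of_nat (i choose j) * (\<Sum>c<m. mderiv (i - j) A t $$ (r, c) * (0\<^sub>v m @\<^sub>v y) $ (j * m + c)))"
        by (simp only: leibniz_mat_mult_vec_index[OF X i r] lessThan_Suc_atMost)
      also have "\<dots> = (\<Sum>j<Suc i'. of_nat (Suc i' choose Suc j)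
                          * (\<Sum>c<m. mderiv (Suc i' - Suc j) A t $$ (r, c) * (0\<^sub>v m @\<^sub>v y) $ (Suc j * m + c)))"
        unfolding Suc sum.lessThan_Suc_shift by simp
      also have "\<dots> = (\<Sum>j<Suc i'. of_nat (Suc i' choose Suc j) * (\<Sum>c<m. mderiv (i' - j) A t $$ (r, c) * y $ (j * m + c)))"
        using i' by (intro sum.cong refl arg_cong2[where f = "(*)"])
                    (simp_all add: append_block_index[OF zero_carrier_vec y] del: mult_Suc)
      also have "\<dots> = (shifted_leibniz_mat k m A t *\<^sub>v y) $ (i' * m + r)"
        by (simp only: shifted_leibniz_mat_mult_vec_index[OF y i' r] lessThan_Suc_atMost)
      also have "\<dots> = (0\<^sub>v m @\<^sub>v (shifted_leibniz_mat k m A t *\<^sub>v y)) $ (i * m + r)"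
        using append_block_index[OF zero_carrier_vec mult_mat_vec_carrier[OF shifted_leibniz_mat_carrier y] i' r]
        by (simp add: Suc)
      finally show ?thesis .
    qed
  qed
qed

section \<open>Invariance under equivalence\<close>

lemma mat_kernel_eqI:
  assumes "A \<in> carrier_mat na n" "B \<in> carrier_mat nb n"
    and "\<And>y. y \<in> carrier_vec n \<Longrightarrow> A *\<^sub>v y = 0\<^sub>v na \<longleftrightarrow> B *\<^sub>v y = 0\<^sub>v nb"
  shows "mat_kernel A = mat_kernel B"
  using assms unfolding mat_kernel_def by auto

lemma append_eq_zero_iff:
  assumes "v \<in> carrier_vec a" "w \<in> carrier_vec b"
  shows "v @\<^sub>v w = 0\<^sub>v (a + b) \<longleftrightarrow> v = 0\<^sub>v a \<and> w = (0\<^sub>v b :: real vec)"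
proof -
  have "0\<^sub>v (a + b) = 0\<^sub>v a @\<^sub>v (0\<^sub>v b :: real vec)" by (rule eq_vecI) auto
  then show ?thesis using append_vec_eq[OF assms(1) zero_carrier_vec] assms(2) by simp
qed

lemma mult_mat_vec_zero [simp]: "A \<in> carrier_mat n n' \<Longrightarrow> A *\<^sub>v 0\<^sub>v n' = (0\<^sub>v n :: real vec)"
  by (rule eq_vecI) (auto simp: scalar_prod_def)

lemma deriv_array_op_zero_append:
  assumes "y \<in> carrier_vec (Suc k * m)"
  shows "deriv_array_op m E F k t (0\<^sub>v m @\<^sub>v y) = calE m E F k t *\<^sub>v y"
  unfolding deriv_array_op_append[OF zero_carrier_vec assms] mult_mat_vec_zero[OF calF_carrier]
  by (rule left_zero_vec[OF mult_mat_vec_carrier[OF calE_carrier assms]])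

lemma leibniz_mat_mult_eq_zero_iff:
  assumes "A t \<in> carrier_mat m m" "det (A t) \<noteq> 0" "v \<in> carrier_vec (Suc n * m)"
  shows "leibniz_mat n m A t *\<^sub>v v = 0\<^sub>v (Suc n * m) \<longleftrightarrow> v = 0\<^sub>v (Suc n * m)"
  using leibniz_mat_kernel[of A t m, OF assms] mult_mat_vec_zero[OF leibniz_mat_carrier] by blast

lemma add_eq_zero_iff_eq_uminus_vec:
  assumes a: "a \<in> carrier_vec n" and b: "b \<in> carrier_vec n"
  shows "a + b = 0\<^sub>v n \<longleftrightarrow> a = - (b :: 'a :: ab_group_add vec)"
proof
  assume ab: "a + b = 0\<^sub>v n"
  show "a = - b"
  proof (rule eq_vecI)
    fix i assume "i < dim_vec (- b)"
    then have "i < n" using b by simp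
    then have "(a + b) $ i = 0" using ab by simp
    then show "a $ i = (- b) $ i" using a b \<open>i < n\<close> by (simp add: eq_neg_iff_add_eq_0)
  qed (use a b in simp)
qed (use a b in \<open>auto intro!: eq_vecI\<close>)

lemma calS_iff_deriv_array_op:
  assumes z: "z \<in> carrier_vec m"
  shows "z \<in> calS m E F k t \<longleftrightarrow>
           (\<exists>y \<in> carrier_vec (Suc k * m). deriv_array_op m E F k t (z @\<^sub>v y) = 0\<^sub>v (Suc k * m))"
proof -
  have "deriv_array_op m E F k t (z @\<^sub>v y) = 0\<^sub>v (Suc k * m) \<longleftrightarrow> calF m F k t *\<^sub>v z = calE m E F k t *\<^sub>v (- y)"
    if y: "y \<in> carrier_vec (Suc k * m)" for y
  proof -
    have "calE m E F k t *\<^sub>v (- y) = - (calE m E F k t *\<^sub>v y)"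
      using y by (intro eq_vecI) (auto simp: scalar_prod_def sum_negf)
    moreover have "calF m F k t *\<^sub>v z \<in> carrier_vec (Suc k * m)" "calE m E F k t *\<^sub>v y \<in> carrier_vec (Suc k * m)"
      by (rule mult_mat_vec_carrier[OF calF_carrier z], rule mult_mat_vec_carrier[OF calE_carrier y])
    ultimately show ?thesis
      unfolding deriv_array_op_append[OF z y] by (simp add: add_eq_zero_iff_eq_uminus_vec)
  qed
  note inner = this
  show ?thesis
  proof
    assume "z \<in> calS m E F k t"
    then obtain y where y: "y \<in> carrier_vec (Suc k * m)" "calF m F k t *\<^sub>v z = calE m E F k t *\<^sub>v y"
      unfolding calS_def Suc_eq_plus1 by blast
    moreover have "- (- y) = y" using y by auto
    ultimately show "\<exists>y \<in> carrier_vec (Suc k * m). deriv_array_op m E F k t (z @\<^sub>v y) = 0\<^sub>v (Suc k * m)"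
      using inner[of "- y"] by (intro bexI[of _ "- y"]) auto
  next
    assume "\<exists>y \<in> carrier_vec (Suc k * m). deriv_array_op m E F k t (z @\<^sub>v y) = 0\<^sub>v (Suc k * m)"
    then obtain y where y: "y \<in> carrier_vec (Suc k * m)" "calF m F k t *\<^sub>v z = calE m E F k t *\<^sub>v (- y)"
      using inner by blast
    moreover have "- y \<in> carrier_vec (Suc k * m)" using y by simp
    ultimately show "z \<in> calS m E F k t" unfolding calS_def Suc_eq_plus1 using z by blast
  qed
qed

locale equivalent_pairs =
  fixes I :: "real set" and m :: nat and E F L K E' F' :: "real \<Rightarrow> real mat"
  assumes I: "open I"
    and E: "smooth_mat_on I m m E" and F: "smooth_mat_on I m m F"
    and L: "smooth_mat_on I m m L" and K: "smooth_mat_on I m m K"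
    and E'_smooth: "smooth_mat_on I m m E'" and F'_smooth: "smooth_mat_on I m m F'"
    and E': "\<And>s. s \<in> I \<Longrightarrow> E' s = L s * E s * K s"
    and F': "\<And>s. s \<in> I \<Longrightarrow> F' s = L s * F s * K s + L s * E s * mderiv 1 K s"
    and det_L: "\<And>s. s \<in> I \<Longrightarrow> det (L s) \<noteq> 0" and det_K: "\<And>s. s \<in> I \<Longrightarrow> det (K s) \<noteq> 0"
begin

lemma carriers:
  assumes "t \<in> I"
  shows "E t \<in> carrier_mat m m" "E' t \<in> carrier_mat m m" "L t \<in> carrier_mat m m" "K t \<in> carrier_mat m m"
  using smooth_mat_on_carrier[OF _ assms] E E'_smooth L K by blast+

lemma deriv_array_op_transform:
  assumes "t \<in> I" "X \<in> carrier_vec (Suc (Suc k) * m)"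
  shows "deriv_array_op m E' F' k t X =
           leibniz_mat k m L t *\<^sub>v deriv_array_op m E F k t (leibniz_mat (Suc k) m K t *\<^sub>v X)"
  by (rule deriv_array_op_equiv[OF I assms(1) E F L K E'_smooth F'_smooth E' F' assms(2)])

lemma mat_kernel_calE:
  assumes t: "t \<in> I"
  shows "mat_kernel (calE m E' F' k t) = mat_kernel (calE m E F k t * shifted_leibniz_mat k m K t)"
proof (rule mat_kernel_eqI[OF calE_carrier mult_carrier_mat[OF calE_carrier shifted_leibniz_mat_carrier]])
  fix y :: "real vec" assume y: "y \<in> carrier_vec (Suc k * m)"
  have Qy: "shifted_leibniz_mat k m K t *\<^sub>v y \<in> carrier_vec (Suc k * m)"
    by (rule mult_mat_vec_carrier[OF shifted_leibniz_mat_carrier y])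
  have X: "0\<^sub>v m @\<^sub>v y \<in> carrier_vec (Suc (Suc k) * m)"
    using append_carrier_vec[OF zero_carrier_vec y] by simp
  have "calE m E' F' k t *\<^sub>v y = deriv_array_op m E' F' k t (0\<^sub>v m @\<^sub>v y)"
    by (rule deriv_array_op_zero_append[symmetric, OF y])
  also have "\<dots> = leibniz_mat k m L t *\<^sub>v deriv_array_op m E F k t (leibniz_mat (Suc k) m K t *\<^sub>v (0\<^sub>v m @\<^sub>v y))"
    by (rule deriv_array_op_transform[OF t X])
  also have "\<dots> = leibniz_mat k m L t *\<^sub>v (calE m E F k t *\<^sub>v (shifted_leibniz_mat k m K t *\<^sub>v y))"
    by (simp only: leibniz_mat_mult_zero_append[OF y] deriv_array_op_zero_append[OF Qy])
  finally show "calE m E' F' k t *\<^sub>v y = 0\<^sub>v (Suc k * m)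
      \<longleftrightarrow> calE m E F k t * shifted_leibniz_mat k m K t *\<^sub>v y = 0\<^sub>v (Suc k * m)"
    using leibniz_mat_mult_eq_zero_iff[of L t, OF carriers(3)[OF t] det_L[OF t] mult_mat_vec_carrier[OF calE_carrier Qy]]
    by (simp add: assoc_mult_mat_vec[OF calE_carrier shifted_leibniz_mat_carrier y])
qed

lemma kernel_dim_calE:
  assumes t: "t \<in> I"
  shows "kernel.dim (Suc k * m) (calE m E' F' k t) = kernel.dim (Suc k * m) (calE m E F k t)"
proof -
  obtain C where C: "C \<in> carrier_mat (Suc k * m) (Suc k * m)" "shifted_leibniz_mat k m K t * C = 1\<^sub>m (Suc k * m)"
    using kernel_trivial_inverse[OF shifted_leibniz_mat_carrier]
          shifted_leibniz_mat_kernel[of K t m, OF carriers(4)[OF t] det_K[OF t]] by metis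
  have "kernel.dim (Suc k * m) (calE m E' F' k t)
      = kernel.dim (Suc k * m) (calE m E F k t * shifted_leibniz_mat k m K t)"
    by (simp add: mat_kernel_calE[OF t])
  also have "\<dots> = kernel.dim (Suc k * m) (calE m E F k t)"
    by (rule mat_kernel_dim_mult_eq_right[OF calE_carrier shifted_leibniz_mat_carrier C])
  finally show ?thesis .
qed

lemma kernel_dim_E:
  assumes t: "t \<in> I"
  shows "kernel.dim m (E' t) = kernel.dim m (E t)"
proof -
  note Et = carriers(1)[OF t] and Lt = carriers(3)[OF t] and Kt = carriers(4)[OF t]
  obtain CL where CL: "CL \<in> carrier_mat m m" "CL * L t = 1\<^sub>m m"
    using kernel_trivial_inverse[OF Lt det_nonzero_kernel[OF Lt det_L[OF t]]] by metis
  obtain CK where CK: "CK \<in> carrier_mat m m" "K t * CK = 1\<^sub>m m"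
    using kernel_trivial_inverse[OF Kt det_nonzero_kernel[OF Kt det_K[OF t]]] by metis
  have "kernel.dim m (E' t) = kernel.dim m (L t * E t * K t)" by (simp add: E'[OF t])
  also have "\<dots> = kernel.dim m (L t * E t)"
    by (rule mat_kernel_dim_mult_eq_right[OF mult_carrier_mat[OF Lt Et] Kt CK])
  also have "\<dots> = kernel.dim m (E t)" by (simp add: mat_kernel_mult_eq[OF Et Lt CL])
  finally show ?thesis .
qed

lemma mat_kernel_calD_Suc:
  assumes t: "t \<in> I"
  shows "mat_kernel (calD m E' F' (Suc k) t) = mat_kernel (calD m E F (Suc k) t * leibniz_mat (Suc k) m K t)"
proof (rule mat_kernel_eqI[OF calD_carrier[of E' t, OF carriers(2)[OF t]]
                              mult_carrier_mat[OF calD_carrier[of E t, OF carriers(1)[OF t]] leibniz_mat_carrier]])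
  note Et = carriers(1)[OF t] and E't = carriers(2)[OF t] and Lt = carriers(3)[OF t] and Kt = carriers(4)[OF t]
  fix X :: "real vec" assume X: "X \<in> carrier_vec (Suc (Suc k) * m)"
  define Y where "Y = leibniz_mat (Suc k) m K t *\<^sub>v X"
  have Y: "Y \<in> carrier_vec (Suc (Suc k) * m)" unfolding Y_def by (rule mult_mat_vec_carrier[OF leibniz_mat_carrier X])
  have Y0: "vec_first Y m = K t *\<^sub>v vec_first X m" unfolding Y_def by (rule vec_first_leibniz_mat_mult[where A = K and t = t, OF X Kt])
  have EY: "E t *\<^sub>v vec_first Y m \<in> carrier_vec m" using Et by simp
  have MY: "deriv_array_op m E F k t Y \<in> carrier_vec (Suc k * m)" by (rule deriv_array_op_carrier)
  have "calD m E' F' (Suc k) t *\<^sub>v X = (E' t *\<^sub>v vec_first X m) @\<^sub>v deriv_array_op m E' F' k t X"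
    by (rule calD_Suc_mult_vec[where E = E' and t = t, OF X E't])
  also have "\<dots> = (L t *\<^sub>v (E t *\<^sub>v vec_first Y m)) @\<^sub>v (leibniz_mat k m L t *\<^sub>v deriv_array_op m E F k t Y)"
    unfolding deriv_array_op_transform[OF t X] E'[OF t] Y0 Y_def[symmetric] using Et Lt Kt
    by (simp add: assoc_mult_mat_vec[of _ m m _ m])
  finally have D': "calD m E' F' (Suc k) t *\<^sub>v X
      = (L t *\<^sub>v (E t *\<^sub>v vec_first Y m)) @\<^sub>v (leibniz_mat k m L t *\<^sub>v deriv_array_op m E F k t Y)" .
  have D: "(calD m E F (Suc k) t * leibniz_mat (Suc k) m K t) *\<^sub>v X
      = (E t *\<^sub>v vec_first Y m) @\<^sub>v deriv_array_op m E F k t Y"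
    unfolding assoc_mult_mat_vec[OF calD_carrier[of E t, OF Et] leibniz_mat_carrier X] Y_def[symmetric]
    by (rule calD_Suc_mult_vec[where E = E and t = t, OF Y Et])
  show "calD m E' F' (Suc k) t *\<^sub>v X = 0\<^sub>v (Suc (Suc k) * m)
      \<longleftrightarrow> (calD m E F (Suc k) t * leibniz_mat (Suc k) m K t) *\<^sub>v X = 0\<^sub>v (Suc (Suc k) * m)"
    unfolding D D' mult_Suc[of "Suc k"]
    using append_eq_zero_iff[OF EY MY] append_eq_zero_iff[OF mult_mat_vec_carrier[OF Lt EY]
            mult_mat_vec_carrier[OF leibniz_mat_carrier MY]]
          det_nonzero_kernel[OF Lt det_L[OF t] EY] mult_mat_vec_zero[OF Lt]
          leibniz_mat_mult_eq_zero_iff[of L t, OF Lt det_L[OF t] MY]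
    by auto
qed

lemma kernel_dim_calD:
  assumes t: "t \<in> I"
  shows "kernel.dim (Suc k * m) (calD m E' F' k t) = kernel.dim (Suc k * m) (calD m E F k t)"
proof (cases k)
  case 0
  then show ?thesis using kernel_dim_E[OF t] by (simp add: calD_def)
next
  case (Suc k')
  obtain C where C: "C \<in> carrier_mat (Suc k * m) (Suc k * m)" "leibniz_mat k m K t * C = 1\<^sub>m (Suc k * m)"
    using kernel_trivial_inverse[OF leibniz_mat_carrier]
          leibniz_mat_kernel[of K t m, OF carriers(4)[OF t] det_K[OF t]] by metis
  have "kernel.dim (Suc k * m) (calD m E' F' k t)
      = kernel.dim (Suc k * m) (calD m E F k t * leibniz_mat k m K t)"
    using mat_kernel_calD_Suc[OF t, of k'] Suc by simp
  also have "\<dots> = kernel.dim (Suc k * m) (calD m E F k t)"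
    by (rule mat_kernel_dim_mult_eq_right[OF calD_carrier[of E t, OF carriers(1)[OF t]] leibniz_mat_carrier C])
  finally show ?thesis .
qed

lemma kernel_inter_calS_transfer:
  assumes t: "t \<in> I" and trivial: "mat_kernel (E' t) \<inter> calS m E' F' k t \<subseteq> {0\<^sub>v m}"
  shows "mat_kernel (E t) \<inter> calS m E F k t \<subseteq> {0\<^sub>v m}"
proof
  note Et = carriers(1)[OF t] and E't = carriers(2)[OF t] and Lt = carriers(3)[OF t] and Kt = carriers(4)[OF t]
  fix w assume "w \<in> mat_kernel (E t) \<inter> calS m E F k t"
  then have w: "w \<in> carrier_vec m" and Ew: "E t *\<^sub>v w = 0\<^sub>v m" and "w \<in> calS m E F k t"
    using mat_kernelD[OF Et] by auto
  then obtain y where y: "y \<in> carrier_vec (Suc k * m)" and My: "deriv_array_op m E F k t (w @\<^sub>v y) = 0\<^sub>v (Suc k * m)"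
    using calS_iff_deriv_array_op[OF w] by blast
  have X: "w @\<^sub>v y \<in> carrier_vec (Suc (Suc k) * m)" using append_carrier_vec[OF w y] by simp
  obtain C where C: "C \<in> carrier_mat (Suc (Suc k) * m) (Suc (Suc k) * m)"
    "leibniz_mat (Suc k) m K t * C = 1\<^sub>m (Suc (Suc k) * m)"
    using kernel_trivial_inverse[OF leibniz_mat_carrier]
          leibniz_mat_kernel[of K t m, OF Kt det_K[OF t]] by metis
  define X' where "X' = C *\<^sub>v (w @\<^sub>v y)"
  have X': "X' \<in> carrier_vec (Suc (Suc k) * m)" unfolding X'_def by (rule mult_mat_vec_carrier[OF C(1) X])
  have KX': "leibniz_mat (Suc k) m K t *\<^sub>v X' = w @\<^sub>v y"
    unfolding X'_def assoc_mult_mat_vec[OF leibniz_mat_carrier C(1) X, symmetric] C(2) using X by simp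
  define z where "z = vec_first X' m"
  have z: "z \<in> carrier_vec m" unfolding z_def by simp
  have Kz: "K t *\<^sub>v z = w"
    unfolding z_def vec_first_leibniz_mat_mult[where A = K and t = t, OF X' Kt, symmetric] KX'
    by (rule vec_first_append[OF w])
  have "z @\<^sub>v vec_last X' (Suc k * m) = X'"
    using vec_first_last_append[of X' m "Suc k * m"] X' unfolding z_def by simp
  moreover have "deriv_array_op m E' F' k t X' = 0\<^sub>v (Suc k * m)"
    by (simp only: deriv_array_op_transform[OF t X'] KX' My mult_mat_vec_zero[OF leibniz_mat_carrier])
  ultimately have "deriv_array_op m E' F' k t (z @\<^sub>v vec_last X' (Suc k * m)) = 0\<^sub>v (Suc k * m)"
    by simp
  then have "z \<in> calS m E' F' k t" using calS_iff_deriv_array_op[OF z] vec_last_carrier by blast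
  moreover have "E' t *\<^sub>v z = 0\<^sub>v m"
    using Et Lt Kt z by (simp add: E'[OF t] assoc_mult_mat_vec[of _ m m _ m] Kz Ew)
  ultimately have "z = 0\<^sub>v m" using trivial z E't by (auto intro: mat_kernelI)
  then show "w \<in> {0\<^sub>v m}" using Kz Kt by simp
qed

end

section \<open>Triangular recurrences\<close>

lemma lower_triangular_recurrence_zero:
  fixes x :: "nat \<Rightarrow> nat \<Rightarrow> real"
  assumes x0: "\<forall>c<d. x 0 c = 0"
    and rec: "\<forall>i\<le>n. \<forall>r<d. x (Suc i) r = (\<Sum>j\<le>i. \<Sum>c<d. \<alpha> i j r c * x j c)"
  shows "\<forall>i\<le>Suc n. \<forall>r<d. x i r = 0"
proof (intro allI impI)
  fix i r assume "i \<le> Suc n" "r < d"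
  then show "x i r = 0"
  proof (induction i arbitrary: r rule: less_induct)
    case (less i)
    show ?case
    proof (cases i)
      case (Suc i')
      then have "x i r = (\<Sum>j\<le>i'. \<Sum>c<d. \<alpha> i' j r c * x j c)" using rec less.prems by auto
      also have "\<dots> = 0" using less Suc by (intro sum.neutral ballI) auto
      finally show ?thesis .
    qed (use x0 less.prems in simp)
  qed
qed

definition nilpotent_recurrence ::
  "nat \<Rightarrow> nat \<Rightarrow> (nat \<Rightarrow> nat \<Rightarrow> nat \<Rightarrow> nat \<Rightarrow> real) \<Rightarrow> (nat \<Rightarrow> nat \<Rightarrow> real) \<Rightarrow> bool" where
  "nilpotent_recurrence a n \<beta> V \<longleftrightarrow>
     (\<forall>i\<le>n. \<forall>q<a. V q i = (\<Sum>j\<le>i. \<Sum>c<a. \<beta> i j q c * V c (Suc j)))"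

text \<open>With strictly upper triangular coefficients, component \<open>q\<close> only depends on components
  \<open>c > q\<close> one order of differentiation higher, so each step down in \<open>q\<close> costs one order.\<close>

lemma nilpotent_recurrence_vanishes:
  assumes upper: "\<And>i j q c. c \<le> q \<Longrightarrow> \<beta> i j q c = 0"
    and rec: "nilpotent_recurrence a n \<beta> V" and q: "q < a" and i: "i + (a - 1 - q) \<le> n"
  shows "V q i = 0"
  using q i
proof (induction "a - q" arbitrary: q i rule: less_induct)
  case less
  have "V q i = (\<Sum>j\<le>i. \<Sum>c<a. \<beta> i j q c * V c (Suc j))"
    using rec less.prems unfolding nilpotent_recurrence_def by auto
  also have "\<dots> = 0"
  proof (intro sum.neutral ballI)
    fix j c assume "j \<in> {..i}" "c \<in> {..<a}"
    then show "\<beta> i j q c * V c (Suc j) = 0"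
      using upper[of c q] less.hyps[of c "Suc j"] less.prems by (cases "c \<le> q") auto
  qed
  finally show ?case .
qed

lemma nilpotent_recurrence_top_zero:
  assumes upper: "\<And>i j q c. c \<le> q \<Longrightarrow> \<beta> i j q c = 0"
    and rec: "nilpotent_recurrence a n \<beta> V" and top: "\<forall>q<a. V q (Suc n) = 0"
    and q: "q < a" and i: "i \<le> Suc n"
  shows "V q i = 0"
  using q i
proof (induction "a - q" arbitrary: q i rule: less_induct)
  case less
  show ?case
  proof (cases "i = Suc n")
    case False
    then have "V q i = (\<Sum>j\<le>i. \<Sum>c<a. \<beta> i j q c * V c (Suc j))"
      using rec less.prems unfolding nilpotent_recurrence_def by auto
    also have "\<dots> = 0"
    proof (intro sum.neutral ballI)
      fix j c assume "j \<in> {..i}" "c \<in> {..<a}"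
      then show "\<beta> i j q c * V c (Suc j) = 0"
        using upper[of c q] less.hyps[of c "Suc j"] less.prems False by (cases "c \<le> q") auto
    qed
    finally show ?thesis .
  qed (use top less.prems in simp)
qed

lemma nilpotent_recurrence_cong:
  assumes "\<And>q i. q < a \<Longrightarrow> i \<le> Suc n \<Longrightarrow> V q i = V' q i"
  shows "nilpotent_recurrence a n \<beta> V \<longleftrightarrow> nilpotent_recurrence a n \<beta> V'"
proof -
  have "(\<Sum>j\<le>i. \<Sum>c<a. \<beta> i j q c * V c (Suc j)) = (\<Sum>j\<le>i. \<Sum>c<a. \<beta> i j q c * V' c (Suc j))"
    if "i \<le> n" for i q
    using assms that by (intro sum.cong refl) auto
  then show ?thesis unfolding nilpotent_recurrence_def using assms by auto
qed

function nilpotent_solution ::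
  "nat \<Rightarrow> nat \<Rightarrow> (nat \<Rightarrow> nat \<Rightarrow> nat \<Rightarrow> nat \<Rightarrow> real) \<Rightarrow> (nat \<Rightarrow> real) \<Rightarrow> nat \<Rightarrow> nat \<Rightarrow> real" where
  "nilpotent_solution a n \<beta> w q i =
     (if i = Suc n then w q
      else \<Sum>j\<le>i. \<Sum>c\<in>{q<..<a}. \<beta> i j q c * nilpotent_solution a n \<beta> w c (Suc j))"
  by pat_completeness auto
termination by (relation "Wellfounded.measure (\<lambda>(a, n, \<beta>, w, q, i). a - q)") auto

declare nilpotent_solution.simps [simp del]

lemma nilpotent_solution:
  assumes upper: "\<And>i j q c. c \<le> q \<Longrightarrow> \<beta> i j q c = 0"
  shows "nilpotent_recurrence a n \<beta> (nilpotent_solution a n \<beta> w)"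
    and "nilpotent_solution a n \<beta> w q (Suc n) = w q"
proof -
  have "(\<Sum>c\<in>{q<..<a}. g c) = (\<Sum>c<a. g c)" if "\<And>c. c \<le> q \<Longrightarrow> g c = 0" for g :: "nat \<Rightarrow> real" and q
    using that by (intro sum.mono_neutral_left) auto
  then show "nilpotent_recurrence a n \<beta> (nilpotent_solution a n \<beta> w)"
    unfolding nilpotent_recurrence_def using upper
    by (subst nilpotent_solution.simps) (auto intro!: sum.cong)
  show "nilpotent_solution a n \<beta> w q (Suc n) = w q"
    by (simp add: nilpotent_solution.simps)
qed

section \<open>The canonical form\<close>

lemma diff_eq_zero_vec_iff:
  assumes x: "x \<in> carrier_vec n" and y: "y \<in> carrier_vec n"
  shows "x - y = 0\<^sub>v n \<longleftrightarrow> x = (y :: 'a :: ab_group_add vec)"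
proof
  assume "x - y = 0\<^sub>v n"
  show "x = y"
  proof (rule eq_vecI)
    fix i assume "i < dim_vec y"
    then have "(x - y) $ i = 0" using \<open>x - y = 0\<^sub>v n\<close> y by simp
    then show "x $ i = y $ i" using x y \<open>i < dim_vec y\<close> by simp
  qed (use x y in simp)
qed (use y in simp)

lemma kernel_dim_by_coordinates:
  fixes A :: "real mat"
  assumes A: "A \<in> carrier_mat nr nc" and off: "off + a \<le> nc"
    and inj: "\<And>y. y \<in> mat_kernel A \<Longrightarrow> (\<forall>q<a. y $ (off + q) = 0) \<Longrightarrow> y = 0\<^sub>v nc"
    and surj: "\<And>w. w \<in> carrier_vec a \<Longrightarrow> \<exists>y \<in> mat_kernel A. \<forall>q<a. y $ (off + q) = w $ q"
  shows "kernel.dim nc A = a"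
proof -
  interpret KA: kernel nr nc A by unfold_locales (rule A)
  interpret W: vec_space "TYPE(real)" a .
  define T where "T = (\<lambda>y :: real vec. vec a (\<lambda>q. y $ (off + q)))"
  have car: "y \<in> carrier_vec nc" if "y \<in> mat_kernel A" for y
    using that mat_kernel_carrier A by auto
  interpret T: linear_map class_ring KA.VK "module_vec TYPE(real) a" T
  proof unfold_locales
    have "T (x + y) = T x + T y" "T (c \<cdot>\<^sub>v x) = c \<cdot>\<^sub>v T x"
      if "x \<in> mat_kernel A" "y \<in> mat_kernel A" for x y c
      using car[OF that(1)] car[OF that(2)] off unfolding T_def by (auto intro!: eq_vecI)
    then show "T \<in> module_hom class_ring KA.VK (module_vec TYPE(real) a)"
      unfolding module_hom_def by (auto simp: module_vec_simps T_def)
  qed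
  have fin: "KA.Ker.fin_dim"
    using kernel_basis_exists[OF A] unfolding KA.Ker.fin_dim_def KA.Ker.basis_def by blast
  have "inj_on T (mat_kernel A)"
  proof (rule inj_onI)
    fix x y assume x: "x \<in> mat_kernel A" and y: "y \<in> mat_kernel A" and eq: "T x = T y"
    have "\<forall>q<a. (x - y) $ (off + q) = 0"
    proof (intro allI impI)
      fix q assume "q < a"
      then have "x $ (off + q) = y $ (off + q)" using arg_cong[OF eq, of "\<lambda>v. v $ q"] by (simp add: T_def)
      then show "(x - y) $ (off + q) = 0" using car[OF x] car[OF y] off \<open>q < a\<close> by simp
    qed
    moreover have "x - y \<in> mat_kernel A"
      using x y A car by (auto intro!: mat_kernelI simp: mat_kernelD mult_minus_distrib_mat_vec)
    ultimately have "x - y = 0\<^sub>v nc" using inj by blast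
    then show "x = y" using diff_eq_zero_vec_iff[OF car[OF x] car[OF y]] by simp
  qed
  moreover have "T ` mat_kernel A = carrier_vec a"
  proof
    show "carrier_vec a \<subseteq> T ` mat_kernel A"
    proof
      fix w :: "real vec" assume "w \<in> carrier_vec a"
      with surj obtain y where "y \<in> mat_kernel A" "\<forall>q<a. y $ (off + q) = w $ q" by blast
      moreover from this \<open>w \<in> carrier_vec a\<close> have "T y = w" unfolding T_def by (auto intro!: eq_vecI)
      ultimately show "w \<in> T ` mat_kernel A" by blast
    qed
  qed (auto simp: T_def)
  ultimately have "KA.Ker.dim = W.dim" by (intro T.dim_eq[OF fin]) simp_all
  then show ?thesis using W.dim_is_n by simp
qed

lemma smooth_mat_on_iff:
  "smooth_mat_on I r c A \<longleftrightarrow>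
     (\<forall>t\<in>I. A t \<in> carrier_mat r c) \<and> (\<forall>i<r. \<forall>j<c. smooth_on I (\<lambda>s. A s $$ (i, j)))"
  unfolding smooth_mat_on_def smooth_on_def by blast

lemma smooth_mat_on_const: "A \<in> carrier_mat r c \<Longrightarrow> smooth_mat_on I r c (\<lambda>s. A)"
  unfolding smooth_mat_on_iff by (simp add: smooth_on_const)

lemma mderiv_const: "mderiv k (\<lambda>s. A) t = (if k = 0 then A else 0\<^sub>m (dim_row A) (dim_col A))"
  unfolding mderiv_def higher_deriv_const by (auto intro!: eq_matI)

definition four_block_entry_fun ::
  "nat \<Rightarrow> (real \<Rightarrow> real mat) \<Rightarrow> (real \<Rightarrow> real mat) \<Rightarrow> (real \<Rightarrow> real mat) \<Rightarrow> (real \<Rightarrow> real mat)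
     \<Rightarrow> nat \<Rightarrow> nat \<Rightarrow> real \<Rightarrow> real" where
  "four_block_entry_fun d A B C D i j =
     (if i < d then if j < d then (\<lambda>s. A s $$ (i, j)) else (\<lambda>s. B s $$ (i, j - d))
      else if j < d then (\<lambda>s. C s $$ (i - d, j)) else (\<lambda>s. D s $$ (i - d, j - d)))"

lemma four_block_entry_fun:
  assumes "A s \<in> carrier_mat d d" "D s \<in> carrier_mat a a" "i < d + a" "j < d + a"
  shows "four_block_mat (A s) (B s) (C s) (D s) $$ (i, j) = four_block_entry_fun d A B C D i j s"
  using assms unfolding four_block_entry_fun_def by auto

lemma smooth_mat_on_four_block:
  assumes I: "open I" and A: "smooth_mat_on I d d A" and B: "smooth_mat_on I d a B"
    and C: "smooth_mat_on I a d C" and D: "smooth_mat_on I a a D"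
  shows "smooth_mat_on I (d + a) (d + a) (\<lambda>s. four_block_mat (A s) (B s) (C s) (D s))"
  unfolding smooth_mat_on_iff
proof (intro conjI ballI allI impI)
  fix s assume "s \<in> I"
  then show "four_block_mat (A s) (B s) (C s) (D s) \<in> carrier_mat (d + a) (d + a)"
    using smooth_mat_on_carrier[OF A] smooth_mat_on_carrier[OF D] by simp
next
  fix i j assume i: "i < d + a" and j: "j < d + a"
  have "smooth_on I (four_block_entry_fun d A B C D i j)"
    using i j smooth_mat_on_entry[OF A] smooth_mat_on_entry[OF B] smooth_mat_on_entry[OF C]
      smooth_mat_on_entry[OF D] unfolding four_block_entry_fun_def by auto
  then show "smooth_on I (\<lambda>s. four_block_mat (A s) (B s) (C s) (D s) $$ (i, j))"
    by (rule smooth_on_cong[OF I])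
       (use four_block_entry_fun smooth_mat_on_carrier[OF A] smooth_mat_on_carrier[OF D] i j in metis)
qed

lemma mderiv_four_block:
  assumes I: "open I" and t: "t \<in> I"
    and A: "\<And>s. s \<in> I \<Longrightarrow> A s \<in> carrier_mat d d" and B: "\<And>s. s \<in> I \<Longrightarrow> B s \<in> carrier_mat d a"
    and C: "\<And>s. s \<in> I \<Longrightarrow> C s \<in> carrier_mat a d" and D: "\<And>s. s \<in> I \<Longrightarrow> D s \<in> carrier_mat a a"
  shows "mderiv k (\<lambda>s. four_block_mat (A s) (B s) (C s) (D s)) t
           = four_block_mat (mderiv k A t) (mderiv k B t) (mderiv k C t) (mderiv k D t)"
proof (rule eq_matI)
  have carriers: "mderiv k A t \<in> carrier_mat d d" "mderiv k B t \<in> carrier_mat d a"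
    "mderiv k C t \<in> carrier_mat a d" "mderiv k D t \<in> carrier_mat a a"
    using mderiv_carrier A B C D t by blast+
  fix i j assume "i < dim_row (four_block_mat (mderiv k A t) (mderiv k B t) (mderiv k C t) (mderiv k D t))"
    and "j < dim_col (four_block_mat (mderiv k A t) (mderiv k B t) (mderiv k C t) (mderiv k D t))"
  then have i: "i < d + a" and j: "j < d + a" using carriers by auto
  have "mderiv k (\<lambda>s. four_block_mat (A s) (B s) (C s) (D s)) t $$ (i, j)
      = (deriv ^^ k) (\<lambda>s. four_block_mat (A s) (B s) (C s) (D s) $$ (i, j)) t"
    using A[OF t] D[OF t] i j by (intro mderiv_index) auto
  also have "\<dots> = (deriv ^^ k) (four_block_entry_fun d A B C D i j) t"
    by (rule higher_deriv_cong_open[OF I _ t]) (use four_block_entry_fun A D i j in metis)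
  also have "\<dots> = four_block_mat (mderiv k A t) (mderiv k B t) (mderiv k C t) (mderiv k D t) $$ (i, j)"
    using i j carriers A[OF t] B[OF t] C[OF t] D[OF t]
    by (auto simp: four_block_entry_fun_def mderiv_index)
  finally show "mderiv k (\<lambda>s. four_block_mat (A s) (B s) (C s) (D s)) t $$ (i, j)
      = four_block_mat (mderiv k A t) (mderiv k B t) (mderiv k C t) (mderiv k D t) $$ (i, j)" .
qed (use A[OF t] D[OF t] in \<open>simp_all add: mderiv_def\<close>)

lemma less_add_cases:
  assumes "r < d + (a::nat)"
  obtains "r < d" | q where "q < a" "r = d + q"
  using assms by (metis add_diff_inverse_nat add_less_cancel_left)

lemma vec_eq_zero_blockwise:
  assumes "v \<in> carrier_vec (n * m)"
  shows "v = 0\<^sub>v (n * m) \<longleftrightarrow> (\<forall>i<n. \<forall>r<m. v $ (i * m + r) = 0)"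
  using assms block_index_less by (auto intro!: vec_eq_blockI)

locale canonical_pair =
  fixes I :: "real set" and m d a :: nat and \<Omega> N :: "real \<Rightarrow> real mat" and t :: real
  assumes I: "open I" and t: "t \<in> I" and m: "m = d + a"
    and \<Omega>: "smooth_mat_on I d d \<Omega>" and N: "smooth_mat_on I a a N"
    and N_upper: "\<forall>s\<in>I. strictly_upper_triangular a (N s)"
begin

definition Ec :: "real \<Rightarrow> real mat" where
  "Ec s = four_block_mat (1\<^sub>m d) (0\<^sub>m d a) (0\<^sub>m a d) (N s)"

definition Fc :: "real \<Rightarrow> real mat" where
  "Fc s = four_block_mat (\<Omega> s) (0\<^sub>m d a) (0\<^sub>m a d) (1\<^sub>m a)"

lemma smooth_Ec: "smooth_mat_on I m m Ec"
  unfolding Ec_def[abs_def] m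
  by (intro smooth_mat_on_four_block I N smooth_mat_on_const) auto

lemma smooth_Fc: "smooth_mat_on I m m Fc"
  unfolding Fc_def[abs_def] m
  by (intro smooth_mat_on_four_block I \<Omega> smooth_mat_on_const) auto

lemma Ec_carrier: "Ec t \<in> carrier_mat m m"
  using smooth_mat_on_carrier[OF smooth_Ec t] .

lemma mderiv_Ec:
  "mderiv k Ec t = four_block_mat (if k = 0 then 1\<^sub>m d else 0\<^sub>m d d) (0\<^sub>m d a) (0\<^sub>m a d) (mderiv k N t)"
  unfolding Ec_def[abs_def]
  using mderiv_four_block[OF I t, where d = d and a = a and A = "\<lambda>s. 1\<^sub>m d" and B = "\<lambda>s. 0\<^sub>m d a" and C = "\<lambda>s. 0\<^sub>m a d"]
    smooth_mat_on_carrier[OF N] by (simp add: mderiv_const)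

lemma mderiv_Fc:
  "mderiv k Fc t = four_block_mat (mderiv k \<Omega> t) (0\<^sub>m d a) (0\<^sub>m a d) (if k = 0 then 1\<^sub>m a else 0\<^sub>m a a)"
  unfolding Fc_def[abs_def]
  using mderiv_four_block[OF I t, where d = d and a = a and B = "\<lambda>s. 0\<^sub>m d a" and C = "\<lambda>s. 0\<^sub>m a d" and D = "\<lambda>s. 1\<^sub>m a"]
    smooth_mat_on_carrier[OF \<Omega>] by (simp add: mderiv_const)

lemma mderiv_N_lower:
  assumes "q < a" "c \<le> q"
  shows "mderiv k N t $$ (q, c) = 0"
proof -
  have "mderiv k N t $$ (q, c) = (deriv ^^ k) (\<lambda>s. N s $$ (q, c)) t"
    using assms smooth_mat_on_carrier[OF N t] by (intro mderiv_index) auto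
  also have "\<dots> = (deriv ^^ k) (\<lambda>s. 0) t"
    by (rule higher_deriv_cong_open[OF I _ t]) (use N_upper assms in \<open>auto simp: strictly_upper_triangular_def\<close>)
  finally show ?thesis by (simp add: higher_deriv_const)
qed

lemma Ec_index:
  assumes "i < m" "j < m"
  shows "Ec t $$ (i, j) = (if i < d then if j < d \<and> i = j then 1 else 0
                           else if j < d then 0 else N t $$ (i - d, j - d))"
  using assms smooth_mat_on_carrier[OF N t] unfolding Ec_def m by auto

lemma Ec_mult_vec_index:
  assumes v: "v \<in> carrier_vec m"
  shows "r < d \<Longrightarrow> (Ec t *\<^sub>v v) $ r = v $ r"
    and "q < a \<Longrightarrow> (Ec t *\<^sub>v v) $ (d + q) = (\<Sum>c<a. N t $$ (q, c) * v $ (d + c))"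
proof -
  have split: "(\<Sum>c<m. g c) = (\<Sum>c<d. g c) + (\<Sum>c<a. g (d + c))" for g :: "nat \<Rightarrow> real"
    unfolding m by (rule sum_lessThan_add)
  show "(Ec t *\<^sub>v v) $ r = v $ r" if "r < d"
  proof -
    have "r < m" using that m by simp
    then have "(Ec t *\<^sub>v v) $ r = (\<Sum>c<d. v $ c * Ec t $$ (r, c)) + (\<Sum>c<a. v $ (d + c) * Ec t $$ (r, d + c))"
      by (simp only: mult_mat_vec_index_sum[OF Ec_carrier v] split)
    moreover have "Ec t $$ (r, c) = (if c = r then 1 else 0)" if "c < d" for c
      using Ec_index[of r c] \<open>r < d\<close> that m by auto
    moreover have "Ec t $$ (r, d + c) = 0" if "c < a" for c
      using Ec_index[of r "d + c"] \<open>r < d\<close> that m by auto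
    ultimately show ?thesis using that by (simp add: if_distrib[of "\<lambda>x. _ * x"] cong: if_cong)
  qed
  show "(Ec t *\<^sub>v v) $ (d + q) = (\<Sum>c<a. N t $$ (q, c) * v $ (d + c))" if "q < a"
  proof -
    have "d + q < m" using that m by simp
    then have "(Ec t *\<^sub>v v) $ (d + q) = (\<Sum>c<d. v $ c * Ec t $$ (d + q, c)) + (\<Sum>c<a. v $ (d + c) * Ec t $$ (d + q, d + c))"
      by (simp only: mult_mat_vec_index_sum[OF Ec_carrier v] split)
    moreover have "Ec t $$ (d + q, c) = 0" if "c < d" for c
      using Ec_index[of "d + q" c] \<open>q < a\<close> that m by auto
    moreover have "Ec t $$ (d + q, d + c) = N t $$ (q, c)" if "c < a" for c
      using Ec_index[of "d + q" "d + c"] \<open>q < a\<close> that m by auto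
    ultimately show ?thesis by (simp add: mult.commute)
  qed
qed

lemma mderiv_Ec_index:
  assumes "i < m" "j < m"
  shows "mderiv k Ec t $$ (i, j) = (if i < d then if j < d \<and> i = j \<and> k = 0 then 1 else 0
                                    else if j < d then 0 else mderiv k N t $$ (i - d, j - d))"
  using assms carrier_matD[OF smooth_mat_on_carrier[OF N t]] unfolding mderiv_Ec m by (auto simp: mderiv_def)

lemma mderiv_Fc_index:
  assumes "i < m" "j < m"
  shows "mderiv k Fc t $$ (i, j) = (if i < d then if j < d then mderiv k \<Omega> t $$ (i, j) else 0
                                    else if j < d then 0 else if i = j \<and> k = 0 then 1 else 0)"
  using assms carrier_matD[OF smooth_mat_on_carrier[OF \<Omega> t]] unfolding mderiv_Fc m by (auto simp: mderiv_def)

lemma mderiv_canonical_u_row: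
  assumes "r < d"
  shows "c < d \<Longrightarrow> mderiv k Ec t $$ (r, c) = (if c = r \<and> k = 0 then 1 else 0)"
    and "c < d \<Longrightarrow> mderiv k Fc t $$ (r, c) = mderiv k \<Omega> t $$ (r, c)"
    and "c < a \<Longrightarrow> mderiv k Ec t $$ (r, d + c) = 0"
    and "c < a \<Longrightarrow> mderiv k Fc t $$ (r, d + c) = 0"
  using assms m by (auto simp: mderiv_Ec_index mderiv_Fc_index)

lemma mderiv_canonical_v_row:
  assumes "q < a"
  shows "c < d \<Longrightarrow> mderiv k Ec t $$ (d + q, c) = 0"
    and "c < d \<Longrightarrow> mderiv k Fc t $$ (d + q, c) = 0"
    and "c < a \<Longrightarrow> mderiv k Ec t $$ (d + q, d + c) = mderiv k N t $$ (q, c)"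
    and "c < a \<Longrightarrow> mderiv k Fc t $$ (d + q, d + c) = (if c = q \<and> k = 0 then 1 else 0)"
  using assms m by (auto simp: mderiv_Ec_index mderiv_Fc_index)

lemma sum_lessThan_m: "(\<Sum>c<m. g c) = (\<Sum>c<d. g c) + (\<Sum>c<a. g (d + c))"
  unfolding m by (rule sum_lessThan_add)

lemma deriv_array_op_canonical_u:
  assumes X: "X \<in> carrier_vec (Suc (Suc n) * m)" and i: "i < Suc n" and r: "r < d"
  shows "deriv_array_op m Ec Fc n t X $ (i * m + r) = X $ (Suc i * m + r)
           + (\<Sum>j\<le>i. \<Sum>c<d. of_nat (i choose j) * mderiv (i - j) \<Omega> t $$ (r, c) * X $ (j * m + c))"
proof -
  have "r < m" using r m by simp
  have "(\<Sum>c<m. mderiv (i - j) Ec t $$ (r, c) * X $ (Suc j * m + c) + mderiv (i - j) Fc t $$ (r, c) * X $ (j * m + c))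
      = (if j = i then X $ (Suc i * m + r) else 0) + (\<Sum>c<d. mderiv (i - j) \<Omega> t $$ (r, c) * X $ (j * m + c))"
    if "j \<le> i" for j
    using that r by (cases "j = i") (simp_all add: sum_lessThan_m mderiv_canonical_u_row sum.distrib
                                                  if_distrib[of "\<lambda>x. x * _"] cong: if_cong)
  then show ?thesis
    using i by (simp add: deriv_array_op_index[OF X i \<open>r < m\<close>] distrib_left sum.distrib sum_distrib_left
                          mult.assoc if_distrib[of "\<lambda>x. _ * x"] cong: if_cong)
qed

lemma deriv_array_op_canonical_v:
  assumes X: "X \<in> carrier_vec (Suc (Suc n) * m)" and i: "i < Suc n" and q: "q < a"
  shows "deriv_array_op m Ec Fc n t X $ (i * m + (d + q)) = X $ (i * m + (d + q))
           + (\<Sum>j\<le>i. \<Sum>c<a. of_nat (i choose j) * mderiv (i - j) N t $$ (q, c) * X $ (Suc j * m + (d + c)))"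
proof -
  have "d + q < m" using q m by simp
  have "(\<Sum>c<m. mderiv (i - j) Ec t $$ (d + q, c) * X $ (Suc j * m + c) + mderiv (i - j) Fc t $$ (d + q, c) * X $ (j * m + c))
      = (if j = i then X $ (i * m + (d + q)) else 0) + (\<Sum>c<a. mderiv (i - j) N t $$ (q, c) * X $ (Suc j * m + (d + c)))"
    if "j \<le> i" for j
    using that q by (cases "j = i") (simp_all add: sum_lessThan_m mderiv_canonical_v_row sum.distrib
                                                  if_distrib[of "\<lambda>x. x * _"] cong: if_cong)
  then show ?thesis
    using i by (simp add: deriv_array_op_index[OF X i \<open>d + q < m\<close>] distrib_left sum.distrib sum_distrib_left
                          mult.assoc if_distrib[of "\<lambda>x. _ * x"] cong: if_cong)
qed

text \<open>The coefficients of the recurrence for the \<open>N\<close>-part, with the strict upper triangularity of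
  \<open>N\<close> made syntactic.\<close>

definition nil_coeff :: "nat \<Rightarrow> nat \<Rightarrow> nat \<Rightarrow> nat \<Rightarrow> real" where
  "nil_coeff i j q c = (if q < c then - (of_nat (i choose j) * mderiv (i - j) N t $$ (q, c)) else 0)"

lemma nil_coeff_upper: "c \<le> q \<Longrightarrow> nil_coeff i j q c = 0"
  unfolding nil_coeff_def by simp

lemma sum_nil_coeff:
  assumes "q < a"
  shows "(\<Sum>j\<le>i. \<Sum>c<a. nil_coeff i j q c * Y j c)
           = - (\<Sum>j\<le>i. \<Sum>c<a. of_nat (i choose j) * mderiv (i - j) N t $$ (q, c) * Y j c)"
proof -
  have "nil_coeff i j q c * Y j c = - (of_nat (i choose j) * mderiv (i - j) N t $$ (q, c) * Y j c)" for j c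
    using mderiv_N_lower[OF assms, of c "i - j"] by (cases "q < c") (auto simp: nil_coeff_def)
  then show ?thesis by (simp add: sum_negf)
qed

text \<open>In the canonical form the derivative array splits into the differentiated ODE
  \<open>u' = -\<Omega> u\<close> and the differentiated recurrence \<open>v = -N v'\<close> of the nilpotent part.\<close>

lemma deriv_array_op_canonical_eq_zero_iff:
  assumes X: "X \<in> carrier_vec (Suc (Suc n) * m)"
  shows "deriv_array_op m Ec Fc n t X = 0\<^sub>v (Suc n * m) \<longleftrightarrow>
     (\<forall>i\<le>n. \<forall>r<d. X $ (Suc i * m + r)
        = (\<Sum>j\<le>i. \<Sum>c<d. - (of_nat (i choose j) * mderiv (i - j) \<Omega> t $$ (r, c)) * X $ (j * m + c)))
     \<and> nilpotent_recurrence a n nil_coeff (\<lambda>q j. X $ (j * m + (d + q)))"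
proof -
  have rows: "(\<forall>r<m. P r) \<longleftrightarrow> (\<forall>r<d. P r) \<and> (\<forall>q<a. P (d + q))" for P
    by (metis m less_add_cases add_less_cancel_left trans_less_add1)
  show ?thesis
    unfolding vec_eq_zero_blockwise[OF deriv_array_op_carrier] rows nilpotent_recurrence_def
    by (auto simp: deriv_array_op_canonical_u[OF X] deriv_array_op_canonical_v[OF X] sum_nil_coeff
                   sum_negf less_Suc_eq_le add_eq_0_iff)
qed

lemma deriv_array_op_canonical_kernel_unique:
  assumes X: "X \<in> carrier_vec (Suc (Suc n) * m)" and M: "deriv_array_op m Ec Fc n t X = 0\<^sub>v (Suc n * m)"
    and u0: "\<forall>c<d. X $ c = 0" and top: "\<forall>q<a. X $ (Suc n * m + (d + q)) = 0"
  shows "X = 0\<^sub>v (Suc (Suc n) * m)"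
proof -
  note rec = M[unfolded deriv_array_op_canonical_eq_zero_iff[OF X]]
  have u: "\<forall>i\<le>Suc n. \<forall>r<d. X $ (i * m + r) = 0"
    by (rule lower_triangular_recurrence_zero[where x = "\<lambda>i r. X $ (i * m + r)"
          and \<alpha> = "\<lambda>i j r c. - (of_nat (i choose j) * mderiv (i - j) \<Omega> t $$ (r, c))"])
       (use u0 in simp, use rec in blast)
  have v: "X $ (i * m + (d + q)) = 0" if "i \<le> Suc n" "q < a" for i q
    by (rule nilpotent_recurrence_top_zero[where \<beta> = nil_coeff and a = a and n = n
          and V = "\<lambda>q j. X $ (j * m + (d + q))", OF nil_coeff_upper])
       (use rec top that in blast)+
  show ?thesis
    unfolding vec_eq_zero_blockwise[OF X]
  proof (intro allI impI)
    fix i r assume i: "i < Suc (Suc n)" and "r < m"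
    then have "r < d + a" using m by simp
    then show "X $ (i * m + r) = 0"
    proof (cases rule: less_add_cases)
      case 1
      then show ?thesis using u i by simp
    next
      case (2 q)
      then show ?thesis using v[of i q] i by simp
    qed
  qed
qed

lemma deriv_array_op_canonical_kernel_exists:
  assumes w: "w \<in> carrier_vec a"
  obtains X where "X \<in> carrier_vec (Suc (Suc n) * m)" "deriv_array_op m Ec Fc n t X = 0\<^sub>v (Suc n * m)"
    "\<And>j c. j < Suc (Suc n) \<Longrightarrow> c < d \<Longrightarrow> X $ (j * m + c) = 0"
    "\<And>q. q < a \<Longrightarrow> X $ (Suc n * m + (d + q)) = w $ q"
    "\<And>q. q < a \<Longrightarrow> a - 1 - q \<le> n \<Longrightarrow> X $ (d + q) = 0"
proof -
  define V where "V = nilpotent_solution a n nil_coeff (\<lambda>q. w $ q)"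
  have rec: "nilpotent_recurrence a n nil_coeff V"
    unfolding V_def by (rule nilpotent_solution(1)[OF nil_coeff_upper])
  define X where "X = vec (Suc (Suc n) * m) (\<lambda>p. if p mod m < d then 0 else V (p mod m - d) (p div m))"
  have X: "X \<in> carrier_vec (Suc (Suc n) * m)" unfolding X_def by simp
  have u: "X $ (j * m + c) = 0" if "j < Suc (Suc n)" "c < d" for j c
    using that block_index_less[of j "Suc (Suc n)" c m] m unfolding X_def by simp
  have v: "X $ (j * m + (d + q)) = V q j" if "j < Suc (Suc n)" "q < a" for j q
    using that block_index_less[of j "Suc (Suc n)" "d + q" m] m unfolding X_def by simp
  have "deriv_array_op m Ec Fc n t X = 0\<^sub>v (Suc n * m)"
    unfolding deriv_array_op_canonical_eq_zero_iff[OF X]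
  proof
    show "nilpotent_recurrence a n nil_coeff (\<lambda>q j. X $ (j * m + (d + q)))"
      using rec by (subst nilpotent_recurrence_cong[where V' = V]) (simp_all add: v)
  qed (use u in \<open>simp del: mult_Suc\<close>)
  moreover have "X $ (Suc n * m + (d + q)) = w $ q" if "q < a" for q
    using v[of "Suc n" q] that nilpotent_solution(2)[OF nil_coeff_upper] by (simp add: V_def)
  moreover have "X $ (d + q) = 0" if "q < a" "a - 1 - q \<le> n" for q
    using v[of 0 q] that nilpotent_recurrence_vanishes[OF nil_coeff_upper rec, of q 0] by simp
  ultimately show thesis using that X u by blast
qed

lemma kernel_dim_calE_canonical:
  assumes k: "a - 1 \<le> k"
  shows "kernel.dim (Suc k * m) (calE m Ec Fc k t) = a"
proof (rule kernel_dim_by_coordinates[OF calE_carrier, where off = "k * m + d"])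
  show "k * m + d + a \<le> Suc k * m" using m by simp
next
  fix y assume "y \<in> mat_kernel (calE m Ec Fc k t)" and top: "\<forall>q<a. y $ (k * m + d + q) = 0"
  then have y: "y \<in> carrier_vec (Suc k * m)" and Ey: "calE m Ec Fc k t *\<^sub>v y = 0\<^sub>v (Suc k * m)"
    using mat_kernelD[OF calE_carrier] by auto
  have X: "0\<^sub>v m @\<^sub>v y \<in> carrier_vec (Suc (Suc k) * m)" using append_carrier_vec[OF zero_carrier_vec y] by simp
  have "0\<^sub>v m @\<^sub>v y = 0\<^sub>v (Suc (Suc k) * m)"
  proof (rule deriv_array_op_canonical_kernel_unique[OF X])
    show "deriv_array_op m Ec Fc k t (0\<^sub>v m @\<^sub>v y) = 0\<^sub>v (Suc k * m)"
      using Ey by (simp add: deriv_array_op_zero_append[OF y])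
    show "\<forall>c<d. (0\<^sub>v m @\<^sub>v y) $ c = 0" using y m by simp
    show "\<forall>q<a. (0\<^sub>v m @\<^sub>v y) $ (Suc k * m + (d + q)) = 0"
      using top m append_block_index[OF zero_carrier_vec y, of k] by (simp add: add.assoc)
  qed
  then show "y = 0\<^sub>v (Suc k * m)"
    using append_eq_zero_iff[OF zero_carrier_vec y] by simp
next
  fix w :: "real vec" assume w: "w \<in> carrier_vec a"
  obtain X where X: "X \<in> carrier_vec (Suc (Suc k) * m)" and M: "deriv_array_op m Ec Fc k t X = 0\<^sub>v (Suc k * m)"
    and u: "\<And>j c. j < Suc (Suc k) \<Longrightarrow> c < d \<Longrightarrow> X $ (j * m + c) = 0"
    and top: "\<And>q. q < a \<Longrightarrow> X $ (Suc k * m + (d + q)) = w $ q"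
    and v0: "\<And>q. q < a \<Longrightarrow> a - 1 - q \<le> k \<Longrightarrow> X $ (d + q) = 0"
    using deriv_array_op_canonical_kernel_exists[OF w, where n = k] by blast
  have "vec_first X m = 0\<^sub>v m"
  proof (rule eq_vecI)
    fix c assume "c < dim_vec (0\<^sub>v m)"
    then have "c < d + a" using m by simp
    then show "vec_first X m $ c = 0\<^sub>v m $ c"
      using u[of 0 c] v0 k m by (cases rule: less_add_cases) (auto simp: vec_first_index)
  qed simp
  then have X_split: "X = 0\<^sub>v m @\<^sub>v vec_last X (Suc k * m)"
    using vec_first_last_append[of X m "Suc k * m"] X by simp
  show "\<exists>y \<in> mat_kernel (calE m Ec Fc k t). \<forall>q<a. y $ (k * m + d + q) = w $ q"
  proof (intro bexI allI impI)
    show "vec_last X (Suc k * m) \<in> mat_kernel (calE m Ec Fc k t)"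
      using M X_split deriv_array_op_zero_append[OF vec_last_carrier]
      by (intro mat_kernelI[OF calE_carrier vec_last_carrier]) metis
    fix q assume "q < a"
    then have "vec_last X (Suc k * m) $ (k * m + (d + q)) = X $ (Suc k * m + (d + q))"
      using m by (intro vec_last_block_index[OF X]) auto
    then show "vec_last X (Suc k * m) $ (k * m + d + q) = w $ q"
      using top[OF \<open>q < a\<close>] by (simp add: add.assoc)
  qed
qed

lemma N_lower: "q < a \<Longrightarrow> c \<le> q \<Longrightarrow> N t $$ (q, c) = 0"
  using N_upper t by (auto simp: strictly_upper_triangular_def)

lemma Ec_mult_vec_eq_zeroI:
  assumes v: "v \<in> carrier_vec m" and u: "\<And>r. r < d \<Longrightarrow> v $ r = 0"
    and vanish: "\<And>q c. q < c \<Longrightarrow> c < a \<Longrightarrow> v $ (d + c) = 0"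
  shows "Ec t *\<^sub>v v = 0\<^sub>v m"
proof (rule eq_vecI)
  fix r assume "r < dim_vec (0\<^sub>v m)"
  then have "r < d + a" using m by simp
  then show "(Ec t *\<^sub>v v) $ r = 0\<^sub>v m $ r"
  proof (cases rule: less_add_cases)
    case (2 q)
    have "(\<Sum>c<a. N t $$ (q, c) * v $ (d + c)) = 0"
      using N_lower 2 vanish by (intro sum.neutral ballI) (metis lessThan_iff mult_eq_0_iff not_le)
    then show ?thesis using 2 m Ec_mult_vec_index(2)[OF v] by simp
  qed (use m Ec_mult_vec_index(1)[OF v] u in simp)
qed (use Ec_carrier in simp)

lemma kernel_dim_Ec:
  assumes "a \<le> 1"
  shows "kernel.dim m (Ec t) = a"
proof (rule kernel_dim_by_coordinates[OF Ec_carrier, where off = d])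
  fix y assume "y \<in> mat_kernel (Ec t)" and "\<forall>q<a. y $ (d + q) = 0"
  moreover from this have "y \<in> carrier_vec m" "\<forall>r<d. y $ r = 0"
    using mat_kernelD[OF Ec_carrier] Ec_mult_vec_index(1) by (auto, metis index_zero_vec(1) m trans_less_add1)
  ultimately show "y = 0\<^sub>v m"
    using m by (intro eq_vecI) (auto elim!: less_add_cases)
next
  fix w :: "real vec" assume w: "w \<in> carrier_vec a"
  define y where "y = vec m (\<lambda>p. if p < d then 0 else w $ (p - d))"
  have y: "y \<in> carrier_vec m" unfolding y_def by simp
  have "y \<in> mat_kernel (Ec t)"
    using assms m by (intro mat_kernelI[OF Ec_carrier y] Ec_mult_vec_eq_zeroI[OF y]) (auto simp: y_def)
  moreover have "\<forall>q<a. y $ (d + q) = w $ q" unfolding y_def using m by simp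
  ultimately show "\<exists>y \<in> mat_kernel (Ec t). \<forall>q<a. y $ (d + q) = w $ q" by blast
qed (use m in simp)

lemma mat_kernel_calD_Suc_canonical:
  "X \<in> mat_kernel (calD m Ec Fc (Suc k) t) \<longleftrightarrow> X \<in> carrier_vec (Suc (Suc k) * m)
     \<and> Ec t *\<^sub>v vec_first X m = 0\<^sub>v m \<and> deriv_array_op m Ec Fc k t X = 0\<^sub>v (Suc k * m)"
proof (cases "X \<in> carrier_vec (Suc (Suc k) * m)")
  case True
  have "Ec t *\<^sub>v vec_first X m \<in> carrier_vec m" using Ec_carrier by simp
  then show ?thesis
    using True append_eq_zero_iff[OF _ deriv_array_op_carrier]
    by (simp add: mat_kernel[OF calD_carrier[of Ec t, OF Ec_carrier]]
                  calD_Suc_mult_vec[where E = Ec and t = t, OF True Ec_carrier])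
qed (simp add: mat_kernel[OF calD_carrier[of Ec t, OF Ec_carrier]])

lemma kernel_dim_calD_canonical:
  assumes k: "a - 1 \<le> k"
  shows "kernel.dim (Suc k * m) (calD m Ec Fc k t) = a"
proof (cases k)
  case 0
  then show ?thesis using kernel_dim_Ec k by (simp add: calD_def)
next
  case (Suc k')
  show ?thesis
    unfolding Suc
  proof (rule kernel_dim_by_coordinates[OF calD_carrier[of Ec t, OF Ec_carrier], where off = "Suc k' * m + d"])
    show "Suc k' * m + d + a \<le> Suc (Suc k') * m" using m by simp
  next
    fix X assume "X \<in> mat_kernel (calD m Ec Fc (Suc k') t)" and top: "\<forall>q<a. X $ (Suc k' * m + d + q) = 0"
    then have X: "X \<in> carrier_vec (Suc (Suc k') * m)" and E: "Ec t *\<^sub>v vec_first X m = 0\<^sub>v m"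
      and M: "deriv_array_op m Ec Fc k' t X = 0\<^sub>v (Suc k' * m)"
      using mat_kernel_calD_Suc_canonical by auto
    have "\<forall>c<d. X $ c = 0"
      using Ec_mult_vec_index(1)[OF vec_first_carrier, of _ X] E m by (simp add: vec_first_index)
    then show "X = 0\<^sub>v (Suc (Suc k') * m)"
      using deriv_array_op_canonical_kernel_unique[OF X M] top by (simp add: add.assoc)
  next
    fix w :: "real vec" assume w: "w \<in> carrier_vec a"
    obtain X where X: "X \<in> carrier_vec (Suc (Suc k') * m)"
      and M: "deriv_array_op m Ec Fc k' t X = 0\<^sub>v (Suc k' * m)"
      and u: "\<And>j c. j < Suc (Suc k') \<Longrightarrow> c < d \<Longrightarrow> X $ (j * m + c) = 0"
      and top: "\<And>q. q < a \<Longrightarrow> X $ (Suc k' * m + (d + q)) = w $ q"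
      and v0: "\<And>q. q < a \<Longrightarrow> a - 1 - q \<le> k' \<Longrightarrow> X $ (d + q) = 0"
      using deriv_array_op_canonical_kernel_exists[OF w, where n = k'] by blast
    have "Ec t *\<^sub>v vec_first X m = 0\<^sub>v m"
      using u[of 0] v0 k Suc m by (intro Ec_mult_vec_eq_zeroI) (auto simp: vec_first_index)
    then have "X \<in> mat_kernel (calD m Ec Fc (Suc k') t)"
      using X M mat_kernel_calD_Suc_canonical by blast
    moreover have "\<forall>q<a. X $ (Suc k' * m + d + q) = w $ q" using top by (simp add: add.assoc)
    ultimately show "\<exists>y \<in> mat_kernel (calD m Ec Fc (Suc k') t). \<forall>q<a. y $ (Suc k' * m + d + q) = w $ q"
      by blast
  qed
qed

lemma kernel_inter_calS_canonical:
  assumes k: "a - 1 \<le> k"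
  shows "mat_kernel (Ec t) \<inter> calS m Ec Fc k t \<subseteq> {0\<^sub>v m}"
proof
  fix z assume "z \<in> mat_kernel (Ec t) \<inter> calS m Ec Fc k t"
  then have z: "z \<in> carrier_vec m" and E: "Ec t *\<^sub>v z = 0\<^sub>v m" and "z \<in> calS m Ec Fc k t"
    using mat_kernelD[OF Ec_carrier] by auto
  then obtain y where y: "y \<in> carrier_vec (Suc k * m)" and M: "deriv_array_op m Ec Fc k t (z @\<^sub>v y) = 0\<^sub>v (Suc k * m)"
    using calS_iff_deriv_array_op[OF z] by blast
  have X: "z @\<^sub>v y \<in> carrier_vec (Suc (Suc k) * m)" using append_carrier_vec[OF z y] by simp
  have "nilpotent_recurrence a k nil_coeff (\<lambda>q j. (z @\<^sub>v y) $ (j * m + (d + q)))"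
    using M unfolding deriv_array_op_canonical_eq_zero_iff[OF X] by blast
  then have "(z @\<^sub>v y) $ (0 * m + (d + q)) = 0" if "q < a" for q
    using that k by (intro nilpotent_recurrence_vanishes[OF nil_coeff_upper]) auto
  then have "z $ (d + q) = 0" if "q < a" for q using that z m by simp
  moreover have "z $ r = 0" if "r < d" for r
    using Ec_mult_vec_index(1)[OF z that] E that m by simp
  ultimately have "z = 0\<^sub>v m"
    using z m by (intro eq_vecI) (auto elim!: less_add_cases)
  then show "z \<in> {0\<^sub>v m}" by simp
qed

end

section \<open>Ranks\<close>

lemma mrank_plus_kernel_dim:
  fixes A :: "real mat"
  assumes A: "A \<in> carrier_mat nr nc"
  shows "mrank A + kernel.dim nc A = nc"
proof -
  interpret V: vec_space "TYPE(real)" nc .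
  interpret W: vec_space "TYPE(real)" nr .
  interpret T: linear_map class_ring "module_vec TYPE(real) nc" "module_vec TYPE(real) nr" "\<lambda>v. A *\<^sub>v v"
    by unfold_locales
       (use A in \<open>auto simp: module_hom_def module_vec_simps mult_add_distrib_mat_vec mult_mat_vec\<close>)
  have im: "T.imT = W.span (set (cols A))"
    using W.col_space_eq[OF A] A unfolding W.col_space_def mod_hom.im_def[OF T.mod_hom_axioms] by auto
  have ker: "T.kerT = mat_kernel A"
    unfolding mod_hom.ker_def[OF T.mod_hom_axioms] mat_kernel_def using A by auto
  have "vectorspace.dim class_ring (W.vs T.imT) + vectorspace.dim class_ring (V.vs T.kerT) = V.dim"
    by (rule T.rank_nullity) simp
  moreover have "mrank A = W.rank A" unfolding mrank_def using A by simp
  ultimately show ?thesis unfolding im ker V.dim_is_n W.rank_def by simp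
qed

lemma subspace_dim_zero: "subspace_dim n {0\<^sub>v n} = 0"
proof -
  have "mat_kernel (1\<^sub>m n :: real mat) = {0\<^sub>v n}" unfolding mat_kernel_def by auto
  then have "subspace_dim n {0\<^sub>v n} = kernel.dim n (1\<^sub>m n :: real mat)" unfolding subspace_dim_def by simp
  then show ?thesis using kernel_one_mat by simp
qed

locale equivalent_to_canonical =
  canonical_pair I m d a \<Omega> N t +
  equivalent_pairs I m E F L K "canonical_pair.Ec d a N" "canonical_pair.Fc d a \<Omega>"
  for I m d a \<Omega> N t E F L K
begin

lemma mrank_calE:
  assumes "a - 1 \<le> k"
  shows "mrank (calE m E F k t) = k * m + d"
  using mrank_plus_kernel_dim[OF calE_carrier, of m E F k t] kernel_dim_calE[OF t]
    kernel_dim_calE_canonical[OF assms] m by simp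

lemma mrank_calD:
  assumes "a - 1 \<le> k"
  shows "mrank (calD m E F k t) = k * m + d"
  using mrank_plus_kernel_dim[OF calD_carrier[of E t, OF carriers(1)[OF t]], of F k] kernel_dim_calD[OF t]
    kernel_dim_calD_canonical[OF assms] m by simp

lemma kernel_inter_calS:
  assumes "a - 1 \<le> k"
  shows "mat_kernel (E t) \<inter> calS m E F k t = {0\<^sub>v m}"
proof -
  have "calF m F k t *\<^sub>v 0\<^sub>v m = calE m E F k t *\<^sub>v 0\<^sub>v (Suc k * m)"
    using mult_mat_vec_zero[OF calF_carrier] mult_mat_vec_zero[OF calE_carrier] by simp
  then have "0\<^sub>v m \<in> calS m E F k t"
    unfolding calS_def Suc_eq_plus1[symmetric] by (blast intro: zero_carrier_vec)
  then show ?thesis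
    using kernel_inter_calS_transfer[OF t kernel_inter_calS_canonical[OF assms]] carriers(1)[OF t]
    by (auto intro: mat_kernelI)
qed

end

theorem theoremt:
  fixes I :: "real set" and m d a :: nat
    and E F \<Omega> N :: "real \<Rightarrow> real mat"
  assumes I: "open I" "is_interval I"
    and ma: "m = d + a"
    and smE: "smooth_mat_on I m m E" and smF: "smooth_mat_on I m m F"
    and smO: "smooth_mat_on I d d \<Omega>" and smN: "smooth_mat_on I a a N"
    and Nsut: "\<forall>t\<in>I. strictly_upper_triangular a (N t)"
    and eqv: "equiv_pair I m E F
       (\<lambda>t. four_block_mat (1\<^sub>m d) (0\<^sub>m d a) (0\<^sub>m a d) (N t))
       (\<lambda>t. four_block_mat (\<Omega> t) (0\<^sub>m d a) (0\<^sub>m a d) (1\<^sub>m a))"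
  shows "(\<forall>t\<in>I. \<forall>k. k \<ge> a - 1 \<longrightarrow>
            mrank (calE m E F k t) = k*m + d \<and> mrank (calD m E F k t) = k*m + d)
       \<and> (\<forall>t\<in>I. \<forall>k. k \<ge> a \<longrightarrow>
            subspace_dim m (mat_kernel (E t) \<inter> calS m E F k t) = 0)"
proof -
  obtain L K where L: "smooth_mat_on I m m L" and K: "smooth_mat_on I m m K"
    and LK: "\<forall>t\<in>I. det (L t) \<noteq> 0 \<and> det (K t) \<noteq> 0 \<and>
        four_block_mat (1\<^sub>m d) (0\<^sub>m d a) (0\<^sub>m a d) (N t) = L t * E t * K t \<and>
        four_block_mat (\<Omega> t) (0\<^sub>m d a) (0\<^sub>m a d) (1\<^sub>m a) = L t * F t * K t + L t * E t * mderiv 1 K t"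
    using eqv unfolding equiv_pair_def by blast
  have "equivalent_to_canonical I m d a \<Omega> N t E F L K" if "t \<in> I" for t
  proof -
    interpret canonical_pair I m d a \<Omega> N t
      using I(1) that ma smO smN Nsut by unfold_locales
    show ?thesis
      using I(1) smE smF L K smooth_Ec smooth_Fc LK
      by unfold_locales (auto simp: Ec_def Fc_def)
  qed
  then show ?thesis
    using equivalent_to_canonical.mrank_calE equivalent_to_canonical.mrank_calD
      equivalent_to_canonical.kernel_inter_calS subspace_dim_zero by fastforce
qed

end
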